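(* Let $\alpha\in[0,\infty)$. Let $L$ be the event that $\mathscr{G}(n,\alpha/n)$ contains no cycles and, for $r>0$, let $B_r$ be the event that $\mathscr{G}(n,\alpha/n)$ has no connected component with more than $r$ vertices. Then \[ \lim_{r\to\infty}\liminf_{n\to\infty}P_{n,\alpha}(B_r)^{1/n}=\lim_{\epsilon\downarrow0}\limsup_{n\to\infty}P_{n,\alpha}(B_{\epsilon n})^{1/n}=\lim_{n\to\infty}P_{n,\alpha}(L)^{1/n}, \] all limits existing.
   Context: $\mathscr{G}(n,p)$ is the random graph on vertex set $\{1,\dots,n\}$ in which each of the $\binom n2$ unordered pairs is an edge independently with probability $p$; here $p=\alpha/n$, and $P_{n,\alpha}$ is the corresponding probability measure. *)

theory Defs
  imports "HOL-Analysis.Analysis"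
begin

text \<open>Simple graphs on vertex set {1..n} are represented by their edge sets:
  sets of 2-element subsets of {1..n}.\<close>

definition all_pairs :: "nat \<Rightarrow> nat set set" where
  "all_pairs n = {e. e \<subseteq> {1..n} \<and> card e = 2}"

definition Gnp_prob :: "nat \<Rightarrow> real \<Rightarrow> (nat set set \<Rightarrow> bool) \<Rightarrow> real" where
  "Gnp_prob n p Q =
     (\<Sum>E\<in>{E. E \<subseteq> all_pairs n \<and> Q E}.
        p ^ card E * (1 - p) ^ (card (all_pairs n) - card E))"

definition P_na :: "nat \<Rightarrow> real \<Rightarrow> (nat set set \<Rightarrow> bool) \<Rightarrow> real" where
  "P_na n \<alpha> Q = Gnp_prob n (\<alpha> / real n) Q"

definition has_cycle :: "nat set set \<Rightarrow> bool" where
  "has_cycle E \<longleftrightarrow> (\<exists>vs :: nat list. length vs \<ge> 3 \<and> distinct vs \<and>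
      (\<forall>i < length vs. {vs ! i, vs ! ((i + 1) mod length vs)} \<in> E))"

definition adj :: "nat set set \<Rightarrow> nat \<Rightarrow> nat \<Rightarrow> bool" where
  "adj E x y \<longleftrightarrow> {x, y} \<in> E"

definition component :: "nat \<Rightarrow> nat set set \<Rightarrow> nat \<Rightarrow> nat set" where
  "component n E v = {w \<in> {1..n}. (adj E)\<^sup>*\<^sup>* v w}"

definition event_L :: "nat set set \<Rightarrow> bool" where
  "event_L E \<longleftrightarrow> \<not> has_cycle E"

definition event_B :: "nat \<Rightarrow> real \<Rightarrow> nat set set \<Rightarrow> bool" where
  "event_B n r E \<longleftrightarrow> (\<forall>v \<in> {1..n}. real (card (component n E v)) \<le> r)"

end

theory Submission
  imports Defs
begin

text \<open>With \<open>p = \<alpha> / n\<close> and \<open>x = p / (1 - p)\<close> one has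
  \<open>P(Q) = (1 - p) ^ (n choose 2) * (\<Sum>E\<in>Q. x ^ card E)\<close>. A forest on \<open>n\<close> vertices with
  \<open>c\<close> components contributes \<open>x ^ n * m ^ c\<close> with \<open>m = 1 / x = n / \<alpha> - 1\<close>, so the forests
  whose components have at most \<open>r\<close> vertices are counted by a forest polynomial. Letting every
  component of a forest on \<open>n1 + n2\<close> vertices choose one of two sides shows that this polynomial
  at \<open>m = n / \<alpha>\<close>, divided by \<open>n!\<close>, is supermultiplicative in \<open>n\<close>; by Fekete's lemma its
  \<open>n\<close>-th root converges to a rate \<open>h(r)\<close> that increases with \<open>r\<close>. The remaining factor
  \<open>(1 - p) ^ (n choose 2) * x ^ n * n!\<close> has \<open>n\<close>-th root tending to \<open>\<alpha> * exp (- \<alpha> / 2 - 1)\<close>.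
  Hence \<open>P(B_r) ^ (1/n)\<close> and \<open>P(L) ^ (1/n)\<close> are asymptotically at least this constant times
  \<open>h(r)\<close>, while \<open>P(L) ^ (1/n)\<close> is at most the constant times \<open>sup h\<close>. Finally, a graph in
  \<open>B_(\<epsilon> n)\<close> is a spanning forest together with some of the at most \<open>\<epsilon> n\<^sup>2\<close> pairs inside
  its components, so \<open>P(B_(\<epsilon> n)) \<le> exp (2 \<alpha> \<epsilon> n) * P(L)\<close>, and every \<open>liminf\<close> over
  \<open>B_r\<close> lies below every \<open>limsup\<close> over \<open>B_(\<epsilon> n)\<close>.\<close>

section \<open>Forests\<close>

definition pairs_on :: "'a set \<Rightarrow> 'a set set" where
  "pairs_on V = {e. e \<subseteq> V \<and> card e = 2}"

lemma all_pairs_eq_pairs_on: "all_pairs n = pairs_on {1..n}"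
  by (simp add: all_pairs_def pairs_on_def)

lemma finite_pairs_on: "finite V \<Longrightarrow> finite (pairs_on V)"
  unfolding pairs_on_def by (rule finite_subset[of _ "Pow V"]) auto

lemma pairs_on_mono: "V \<subseteq> W \<Longrightarrow> pairs_on V \<subseteq> pairs_on W"
  unfolding pairs_on_def by auto

lemma pairs_on_disjoint:
  assumes "V \<inter> W = {}"
  shows "pairs_on V \<inter> pairs_on W = {}"
proof (rule equals0I)
  fix e assume "e \<in> pairs_on V \<inter> pairs_on W"
  then have "e \<subseteq> V \<inter> W" "card e = 2" unfolding pairs_on_def by auto
  then show False using assms by simp
qed

lemma pairs_on_empty [simp]: "pairs_on {} = {}"
  unfolding pairs_on_def by auto

lemma pairs_on_singleton [simp]: "pairs_on {v} = {}"
proof (rule equals0I)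
  fix e assume "e \<in> pairs_on {v}"
  then have "e \<subseteq> {v}" "card e = 2" unfolding pairs_on_def by auto
  then show False using card_mono[of "{v}" e] by simp
qed

lemma card_pairs_on_atLeastAtMost: "card (pairs_on {1..n}) = n choose 2"
  unfolding pairs_on_def using n_subsets[of "{1..n}" 2] by simp

lemma pairs_onE:
  assumes "e \<in> pairs_on V"
  obtains a b where "e = {a, b}" "a \<noteq> b" "a \<in> V" "b \<in> V"
  using assms unfolding pairs_on_def card_2_iff by blast

lemma doubleton_in_pairs_onD:
  assumes "{a, b} \<in> pairs_on V"
  shows "a \<in> V" "b \<in> V" "a \<noteq> b"
proof -
  have "{a, b} \<subseteq> V" "card {a, b} = 2" using assms unfolding pairs_on_def by auto
  then show "a \<in> V" "b \<in> V" "a \<noteq> b" by (cases "a = b"; simp)+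
qed

lemma adj_commute: "adj F a b \<longleftrightarrow> adj F b a"
  unfolding adj_def by (simp add: insert_commute)

lemma adj_rtranclp_sym: "(adj F)\<^sup>*\<^sup>* a b \<Longrightarrow> (adj F)\<^sup>*\<^sup>* b a"
  by (rule symp_rtranclp[unfolded symp_def, rule_format]) (auto intro: sympI simp: adj_commute)

lemma adj_rtranclp_mono: "F \<subseteq> F' \<Longrightarrow> (adj F)\<^sup>*\<^sup>* v w \<Longrightarrow> (adj F')\<^sup>*\<^sup>* v w"
  by (rule rtranclp_mono[THEN predicate2D, rotated]) (auto simp: adj_def)

lemma adj_rtranclp_in:
  assumes "F \<subseteq> pairs_on V" "v \<in> V" "(adj F)\<^sup>*\<^sup>* v w"
  shows "w \<in> V"
  using assms(3)
proof (induction rule: rtranclp_induct)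
  case base
  show ?case using assms(2) .
next
  case (step y z)
  have "{y, z} \<in> F" using step.hyps(2) unfolding adj_def .
  then have "{y, z} \<in> pairs_on V" using assms(1) by blast
  then show ?case by (rule doubleton_in_pairs_onD)
qed

lemma adj_rtranclp_empty: "(adj {})\<^sup>*\<^sup>* v w \<longleftrightarrow> w = v"
proof
  show "(adj {})\<^sup>*\<^sup>* v w \<Longrightarrow> w = v"
    by (induction rule: rtranclp_induct) (auto simp: adj_def)
qed simp

lemma walk_reachable:
  assumes "\<forall>i. Suc i < length vs \<longrightarrow> adj F (vs ! i) (vs ! Suc i)" "j < length vs"
  shows "(adj F)\<^sup>*\<^sup>* (vs ! 0) (vs ! j)"
  using assms(2)
proof (induction j)
  case (Suc j)
  then have "(adj F)\<^sup>*\<^sup>* (vs ! 0) (vs ! j)" by simp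
  moreover have "adj F (vs ! j) (vs ! Suc j)" using assms(1) Suc.prems by blast
  ultimately show ?case by (rule rtranclp.rtrancl_into_rtrancl)
qed simp

lemma has_cycle_mono: "has_cycle F \<Longrightarrow> F \<subseteq> F' \<Longrightarrow> has_cycle F'"
  unfolding has_cycle_def by blast

lemma not_has_cycle_empty [simp]: "\<not> has_cycle {}"
proof
  assume "has_cycle {}"
  then obtain vs :: "nat list" where "length vs \<ge> 3"
    and "\<forall>i<length vs. {vs ! i, vs ! ((i + 1) mod length vs)} \<in> ({} :: nat set set)"
    unfolding has_cycle_def by blast
  moreover from this(1) have "0 < length vs" by linarith
  ultimately show False by blast
qed

lemma cycle_vertices_subset:
  assumes "F \<subseteq> pairs_on V" "length vs \<ge> 3"
    and "\<forall>i < length vs. {vs ! i, vs ! ((i + 1) mod length vs)} \<in> F"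
  shows "set vs \<subseteq> V"
proof
  fix x assume "x \<in> set vs"
  then obtain i where "i < length vs" "vs ! i = x" by (auto simp: in_set_conv_nth)
  then have "{vs ! i, vs ! ((i + 1) mod length vs)} \<in> pairs_on V" using assms by blast
  then show "x \<in> V" using \<open>vs ! i = x\<close> by (blast dest: doubleton_in_pairs_onD)
qed

definition is_path :: "nat set set \<Rightarrow> nat list \<Rightarrow> bool" where
  "is_path F vs \<longleftrightarrow> distinct vs \<and> (\<forall>i. Suc i < length vs \<longrightarrow> {vs ! i, vs ! Suc i} \<in> F)"

lemma is_path_Cons:
  assumes "is_path F vs" "vs \<noteq> []" "w \<notin> set vs" "{w, hd vs} \<in> F"
  shows "is_path F (w # vs)"
  unfolding is_path_def
proof (intro conjI allI impI)
  show "distinct (w # vs)" using assms(1,3) unfolding is_path_def by simp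
  fix i assume i: "Suc i < length (w # vs)"
  show "{(w # vs) ! i, (w # vs) ! Suc i} \<in> F"
  proof (cases i)
    case 0
    then show ?thesis using assms(2,4) by (simp add: hd_conv_nth)
  next
    case (Suc k)
    then show ?thesis using assms(1) i unfolding is_path_def by simp
  qed
qed

lemma is_path_chord_has_cycle:
  assumes "is_path F vs" "2 \<le> j" "j < length vs" "{vs ! 0, vs ! j} \<in> F"
  shows "has_cycle F"
  unfolding has_cycle_def
proof (intro exI[of _ "take (Suc j) vs"] conjI allI impI)
  show "3 \<le> length (take (Suc j) vs)" using assms(2,3) by simp
  show "distinct (take (Suc j) vs)" using assms(1) unfolding is_path_def by simp
  fix i assume "i < length (take (Suc j) vs)"
  then have i: "i \<le> j" using assms(3) by simp
  show "{take (Suc j) vs ! i, take (Suc j) vs ! ((i + 1) mod length (take (Suc j) vs))} \<in> F"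
  proof (cases "i = j")
    case True
    then show ?thesis using assms(3,4) by (simp add: insert_commute)
  next
    case False
    then show ?thesis using assms(1,3) i unfolding is_path_def by simp
  qed
qed

lemma longest_path_exists:
  assumes fin: "finite X" and ne: "X \<noteq> {}"
  obtains vs where "vs \<noteq> []" "set vs \<subseteq> X" "is_path F vs"
    and "\<And>ws. ws \<noteq> [] \<Longrightarrow> set ws \<subseteq> X \<Longrightarrow> is_path F ws \<Longrightarrow> length ws \<le> length vs"
proof -
  define P where "P = {vs. vs \<noteq> [] \<and> set vs \<subseteq> X \<and> is_path F vs}"
  have "length vs \<le> card X" if "vs \<in> P" for vs
    using that distinct_card[of vs] card_mono[OF fin, of "set vs"] unfolding P_def is_path_def by simp
  then have "P \<subseteq> {vs. set vs \<subseteq> X \<and> length vs \<le> card X}" unfolding P_def by blast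
  then have finP: "finite P" using finite_lists_length_le[OF fin] finite_subset by blast
  obtain x where "x \<in> X" using ne by blast
  then have "[x] \<in> P" unfolding P_def is_path_def by simp
  then have "Max (length ` P) \<in> length ` P" using finP by (intro Max_in) auto
  then obtain vs where "vs \<in> P" and "length vs = Max (length ` P)" by auto
  moreover have "length ws \<le> Max (length ` P)" if "ws \<in> P" for ws
    using that finP by simp
  ultimately show ?thesis using that unfolding P_def by auto
qed

text \<open>The first vertex of a longest path is a leaf: a second neighbour would either extend
  the path or close a cycle.\<close>

lemma forest_has_leaf:
  assumes fin: "finite X" and ne: "X \<noteq> {}" and FX: "F \<subseteq> pairs_on X" and nc: "\<not> has_cycle F"
  shows "\<exists>v\<in>X. \<forall>a b. {v, a} \<in> F \<and> {v, b} \<in> F \<longrightarrow> a = b"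
proof -
  obtain vs where vsne: "vs \<noteq> []" and vsX: "set vs \<subseteq> X" and path: "is_path F vs"
    and longest: "\<And>ws. ws \<noteq> [] \<Longrightarrow> set ws \<subseteq> X \<Longrightarrow> is_path F ws \<Longrightarrow> length ws \<le> length vs"
    using longest_path_exists[OF fin ne] by blast
  define v where "v = vs ! 0"
  have nbr: "w \<in> set vs" if "{v, w} \<in> F" for w
  proof (rule ccontr)
    assume w: "w \<notin> set vs"
    have "{v, w} \<in> pairs_on X" using that FX by blast
    then have "w \<in> X" by (rule doubleton_in_pairs_onD)
    moreover have "is_path F (w # vs)"
      using is_path_Cons[OF path vsne w] that vsne by (simp add: v_def hd_conv_nth insert_commute)
    ultimately show False using longest[of "w # vs"] vsX by simp
  qed
  have "a = b" if ab: "{v, a} \<in> F" "{v, b} \<in> F" for a b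
  proof (rule ccontr)
    assume "a \<noteq> b"
    obtain ja where ja: "ja < length vs" "vs ! ja = a" using nbr[OF ab(1)] by (metis in_set_conv_nth)
    obtain jb where jb: "jb < length vs" "vs ! jb = b" using nbr[OF ab(2)] by (metis in_set_conv_nth)
    have "{v, a} \<in> pairs_on X" "{v, b} \<in> pairs_on X" using ab FX by blast+
    then have "vs ! 0 \<noteq> vs ! ja" "vs ! 0 \<noteq> vs ! jb"
      using ja jb unfolding v_def by (blast dest: doubleton_in_pairs_onD(3))+
    then have "ja \<noteq> 0" "jb \<noteq> 0" by metis+
    moreover have "ja \<noteq> jb" using ja jb \<open>a \<noteq> b\<close> by auto
    ultimately have "2 \<le> ja \<or> 2 \<le> jb" by linarith
    then show False
      using is_path_chord_has_cycle[OF path] ja jb ab nc unfolding v_def by blast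
  qed
  moreover have "v \<in> X" using vsne vsX unfolding v_def by (simp add: subset_iff)
  ultimately show ?thesis by blast
qed

lemma card_edges_at_leaf:
  assumes FX: "F \<subseteq> pairs_on X" and leaf: "\<forall>a b. {v, a} \<in> F \<and> {v, b} \<in> F \<longrightarrow> a = b"
  shows "card {e \<in> F. v \<in> e} \<le> 1"
proof -
  have shape: "\<exists>w. e = {v, w}" if "e \<in> F" "v \<in> e" for e
  proof -
    have "e \<in> pairs_on X" using that(1) FX by blast
    then obtain a b where "e = {a, b}" by (rule pairs_onE)
    then show ?thesis using that(2) by (metis insert_commute insertE singletonD)
  qed
  have "x = y" if "x \<in> {e \<in> F. v \<in> e}" "y \<in> {e \<in> F. v \<in> e}" for x y
    using shape[of x] shape[of y] that leaf by auto
  then show ?thesis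
    by (cases "finite {e \<in> F. v \<in> e}") (simp_all add: card_le_Suc0_iff_eq)
qed

lemma card_forest_less:
  assumes "finite X" "X \<noteq> {}" "F \<subseteq> pairs_on X" "\<not> has_cycle F"
  shows "card F < card X"
  using assms
proof (induction "card X" arbitrary: X F rule: less_induct)
  case less
  obtain v where v: "v \<in> X" and leaf: "\<forall>a b. {v, a} \<in> F \<and> {v, b} \<in> F \<longrightarrow> a = b"
    using forest_has_leaf[OF less.prems] by blast
  show ?case
  proof (cases "X = {v}")
    case True
    then show ?thesis using less.prems(3) by simp
  next
    case False
    define F' where "F' = {e \<in> F. v \<notin> e}"
    have "F = F' \<union> {e \<in> F. v \<in> e}" unfolding F'_def by auto
    then have "card F \<le> card F' + card {e \<in> F. v \<in> e}" by (metis card_Un_le)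
    also have "\<dots> \<le> card F' + 1" using card_edges_at_leaf[OF less.prems(3) leaf] by simp
    also have "card F' < card (X - {v})"
    proof (rule less.hyps)
      show "card (X - {v}) < card X" using less.prems(1) v by (rule card_Diff1_less)
      show "finite (X - {v})" "X - {v} \<noteq> {}" using less.prems(1) False v by auto
      show "F' \<subseteq> pairs_on (X - {v})" using less.prems(3) unfolding F'_def pairs_on_def by auto
      show "\<not> has_cycle F'" using less.prems(4) has_cycle_mono unfolding F'_def by blast
    qed
    then have "card F' + 1 < card X" using less.prems(1) v by (simp add: card_Diff_singleton)
    finally show ?thesis .
  qed
qed

lemma card_forest_le:
  assumes "finite X" "F \<subseteq> pairs_on X" "\<not> has_cycle F"
  shows "card F \<le> card X"
proof (cases "X = {}")
  case True
  then show ?thesis using assms(2) by simp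
next
  case False
  then show ?thesis using card_forest_less[OF assms(1) False assms(2,3)] by simp
qed

lemma cycle_rotate:
  assumes "\<forall>i < length vs. {vs ! i, vs ! ((i + 1) mod length vs)} \<in> F"
  shows "\<forall>i < length vs. {rotate k vs ! i, rotate k vs ! ((i + 1) mod length vs)} \<in> F"
proof (intro allI impI)
  fix i assume i: "i < length vs"
  define j where "j = (k + i) mod length vs"
  have "j < length vs" unfolding j_def using i by (intro mod_less_divisor) linarith
  moreover have "rotate k vs ! i = vs ! j" unfolding j_def by (rule nth_rotate[OF i])
  moreover have "rotate k vs ! ((i + 1) mod length vs) = vs ! ((j + 1) mod length vs)"
    unfolding j_def using i by (subst nth_rotate) (auto simp: mod_simps ac_simps intro: mod_less_divisor)
  ultimately show "{rotate k vs ! i, rotate k vs ! ((i + 1) mod length vs)} \<in> F"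
    using assms by simp
qed

lemma cycle_edge_reachable:
  assumes nc: "\<not> has_cycle F" and hc: "has_cycle (insert {u, v} F)"
  shows "(adj F)\<^sup>*\<^sup>* u v"
proof -
  obtain vs where L: "length vs \<ge> 3" and d: "distinct vs"
    and E: "\<forall>i < length vs. {vs ! i, vs ! ((i + 1) mod length vs)} \<in> insert {u, v} F"
    using hc unfolding has_cycle_def by blast
  obtain i where i: "i < length vs" and notF: "{vs ! i, vs ! ((i + 1) mod length vs)} \<notin> F"
    using nc L d unfolding has_cycle_def by blast
  \<comment> \<open>Rotate the cycle so that the new edge joins its last vertex to its first.\<close>
  define ws where "ws = rotate (Suc i) vs"
  define l where "l = length vs - 1"
  have len: "length ws = Suc l" and dws: "distinct ws" and l2: "l \<ge> 2"
    using L d unfolding ws_def l_def by auto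
  have "ws ! 0 = vs ! ((Suc i + 0) mod length vs)"
    unfolding ws_def by (rule nth_rotate) (use L in auto)
  moreover have "ws ! l = vs ! ((Suc i + l) mod length vs)"
    unfolding ws_def by (rule nth_rotate) (use L l_def in simp)
  moreover have "Suc i + l = i + length vs" using L unfolding l_def by simp
  then have "(Suc i + l) mod length vs = i" using i by (simp only: mod_add_self2 mod_less)
  ultimately have "{ws ! l, ws ! 0} = {vs ! i, vs ! ((i + 1) mod length vs)}" by simp
  then have uv: "{u, v} = {ws ! l, ws ! 0}" using E i notF by blast
  have "adj F (ws ! j) (ws ! Suc j)" if j: "Suc j < length ws" for j
  proof -
    have "(j + 1) mod length vs = Suc j" using j unfolding ws_def by simp
    then have "{ws ! j, ws ! Suc j} \<in> insert {u, v} F"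
      using cycle_rotate[OF E, of "Suc i"] j unfolding ws_def by (metis Suc_lessD length_rotate)
    moreover have "ws ! j \<noteq> ws ! l" "ws ! j = ws ! 0 \<Longrightarrow> ws ! Suc j \<noteq> ws ! l"
      using j l2 nth_eq_iff_index_eq[OF dws] len by auto
    then have "{ws ! j, ws ! Suc j} \<noteq> {ws ! l, ws ! 0}" by (auto simp: doubleton_eq_iff)
    ultimately show ?thesis unfolding adj_def uv by blast
  qed
  then have "(adj F)\<^sup>*\<^sup>* (ws ! 0) (ws ! l)" using len by (intro walk_reachable) auto
  then show ?thesis using uv adj_rtranclp_sym by (auto simp: doubleton_eq_iff)
qed

lemma spanning_forest_exists:
  assumes "finite E"
  shows "\<exists>F \<subseteq> E. \<not> has_cycle F \<and> (\<forall>u v. {u, v} \<in> E \<longrightarrow> (adj F)\<^sup>*\<^sup>* u v)"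
  using assms
proof (induction rule: finite_induct)
  case (insert e E)
  then obtain F where F: "F \<subseteq> E" "\<not> has_cycle F" "\<forall>u v. {u, v} \<in> E \<longrightarrow> (adj F)\<^sup>*\<^sup>* u v"
    by blast
  show ?case
  proof (cases "\<exists>u v. e = {u, v} \<and> \<not> (adj F)\<^sup>*\<^sup>* u v")
    case True
    then obtain u v where e: "e = {u, v}" and "\<not> (adj F)\<^sup>*\<^sup>* u v" by blast
    then have "\<not> has_cycle (insert e F)" using cycle_edge_reachable[OF F(2)] by blast
    moreover have "(adj (insert e F))\<^sup>*\<^sup>* a b" if "{a, b} \<in> insert e E" for a b
    proof (cases "{a, b} = e")
      case True
      then show ?thesis unfolding adj_def by auto
    next
      case False
      then show ?thesis using that F(3) adj_rtranclp_mono[of F "insert e F"] by blast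
    qed
    ultimately show ?thesis using F(1) by (intro exI[of _ "insert e F"]) blast
  next
    case False
    then show ?thesis using F by blast
  qed
qed simp

section \<open>The forest polynomial\<close>

definition edge_closed :: "nat set set \<Rightarrow> nat set \<Rightarrow> bool" where
  "edge_closed F S \<longleftrightarrow> (\<forall>e\<in>F. e \<subseteq> S \<or> e \<inter> S = {})"

text \<open>For a forest \<open>F\<close>, this is the number of components of \<open>F\<close> restricted to \<open>S\<close>.\<close>

definition component_count :: "nat set set \<Rightarrow> nat set \<Rightarrow> nat" where
  "component_count F S = card S - card (F \<inter> pairs_on S)"

lemma edge_closed_Diff: "F \<subseteq> pairs_on V \<Longrightarrow> edge_closed F S \<Longrightarrow> edge_closed F (V - S)"
  unfolding edge_closed_def pairs_on_def by blast

lemma edge_closed_partition: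
  "F \<subseteq> pairs_on V \<Longrightarrow> edge_closed F S \<Longrightarrow> F = F \<inter> pairs_on S \<union> F \<inter> pairs_on (V - S)"
  unfolding edge_closed_def pairs_on_def by blast

lemma edge_closed_Int_pairs_on:
  assumes "edge_closed (F \<inter> pairs_on (S \<union> Y)) S"
  shows "F \<inter> pairs_on (S \<union> Y) = F \<inter> pairs_on S \<union> F \<inter> pairs_on Y"
proof (intro equalityI subsetI)
  fix e assume e: "e \<in> F \<inter> pairs_on (S \<union> Y)"
  then have "e \<subseteq> S \<or> e \<inter> S = {}" using assms unfolding edge_closed_def by blast
  then show "e \<in> F \<inter> pairs_on S \<union> F \<inter> pairs_on Y" using e unfolding pairs_on_def by blast
next
  fix e assume "e \<in> F \<inter> pairs_on S \<union> F \<inter> pairs_on Y"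
  then show "e \<in> F \<inter> pairs_on (S \<union> Y)"
    using pairs_on_mono[of S "S \<union> Y"] pairs_on_mono[of Y "S \<union> Y"] by blast
qed

lemma component_count_union:
  assumes "finite C" "finite Y" "C \<inter> Y = {}" "C \<union> Y \<subseteq> W"
    and "edge_closed (F \<inter> pairs_on W) C" "\<not> has_cycle F"
  shows "component_count F (C \<union> Y) = component_count F C + component_count F Y"
proof -
  have "edge_closed (F \<inter> pairs_on (C \<union> Y)) C"
    using assms(4,5) pairs_on_mono[OF assms(4)] unfolding edge_closed_def by blast
  then have "F \<inter> pairs_on (C \<union> Y) = F \<inter> pairs_on C \<union> F \<inter> pairs_on Y"
    by (rule edge_closed_Int_pairs_on)
  moreover have "card (F \<inter> pairs_on C \<union> F \<inter> pairs_on Y) = card (F \<inter> pairs_on C) + card (F \<inter> pairs_on Y)"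
    using finite_pairs_on[OF assms(1)] finite_pairs_on[OF assms(2)] pairs_on_disjoint[OF assms(3)]
    by (intro card_Un_disjoint) auto
  moreover have "card (F \<inter> pairs_on C) \<le> card C" "card (F \<inter> pairs_on Y) \<le> card Y"
    using assms(1,2,6) has_cycle_mono by (blast intro: card_forest_le)+
  ultimately show ?thesis
    unfolding component_count_def using card_Un_disjoint[OF assms(1-3)] by simp
qed

lemma minimal_edge_closed_exists:
  assumes "finite V" "V \<noteq> {}" "F \<subseteq> pairs_on V"
  obtains C where "C \<subseteq> V" "C \<noteq> {}" "edge_closed F C"
    and "\<And>S. S \<subseteq> V \<Longrightarrow> edge_closed F S \<Longrightarrow> C \<subseteq> S \<or> C \<inter> S = {}"
proof -
  define CS where "CS = {C. C \<subseteq> V \<and> C \<noteq> {} \<and> edge_closed F C}"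
  have "V \<in> CS" using assms(2,3) unfolding CS_def edge_closed_def pairs_on_def by auto
  moreover have "finite CS" unfolding CS_def using assms(1) by simp
  ultimately have "Min (card ` CS) \<in> card ` CS" by (intro Min_in) auto
  then obtain C where C: "C \<in> CS" and "card C = Min (card ` CS)" by auto
  then have Cmin: "card C \<le> card C'" if "C' \<in> CS" for C'
    using \<open>finite CS\<close> that by simp
  have min: "C \<subseteq> S \<or> C \<inter> S = {}" if "S \<subseteq> V" "edge_closed F S" for S
  proof (rule ccontr)
    assume nd: "\<not> (C \<subseteq> S \<or> C \<inter> S = {})"
    have "edge_closed F (C \<inter> S)" using that(2) C unfolding CS_def edge_closed_def by blast
    then have "C \<inter> S \<in> CS" using nd C unfolding CS_def by blast
    moreover have "card (C \<inter> S) < card C"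
      using nd C assms(1) finite_subset unfolding CS_def by (intro psubset_card_mono) auto
    ultimately show False using Cmin by fastforce
  qed
  from C have "C \<subseteq> V" "C \<noteq> {}" "edge_closed F C" unfolding CS_def by auto
  then show ?thesis using min by (rule that)
qed

lemma edge_closed_subset: "edge_closed F S \<Longrightarrow> F' \<subseteq> F \<Longrightarrow> edge_closed F' S"
  unfolding edge_closed_def by blast

lemma edge_closed_sets_split:
  assumes CV: "C \<subseteq> V" and Ccl: "edge_closed (F \<inter> pairs_on V) C"
    and min: "\<And>S. S \<subseteq> V \<Longrightarrow> edge_closed (F \<inter> pairs_on V) S \<Longrightarrow> C \<subseteq> S \<or> C \<inter> S = {}"
  defines "A \<equiv> {S. S \<subseteq> V - C \<and> edge_closed (F \<inter> pairs_on (V - C)) S}"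
  shows "{S. S \<subseteq> V \<and> edge_closed (F \<inter> pairs_on V) S} = A \<union> (\<lambda>S. C \<union> S) ` A"
proof -
  have sub: "F \<inter> pairs_on (V - C) \<subseteq> F \<inter> pairs_on V" using pairs_on_mono[of "V - C" V] by blast
  have outside: "e \<in> F \<inter> pairs_on (V - C)" if "e \<in> F \<inter> pairs_on V" "\<not> e \<subseteq> C" for e
  proof -
    have "e \<inter> C = {}" using Ccl that unfolding edge_closed_def by blast
    then show ?thesis using that(1) unfolding pairs_on_def by blast
  qed
  show ?thesis
  proof (intro equalityI subsetI)
    fix S assume "S \<in> {S. S \<subseteq> V \<and> edge_closed (F \<inter> pairs_on V) S}"
    then have SV: "S \<subseteq> V" and Scl: "edge_closed (F \<inter> pairs_on V) S" by auto
    show "S \<in> A \<union> (\<lambda>S. C \<union> S) ` A"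
    proof (cases "C \<inter> S = {}")
      case True
      then have "S \<in> A" using SV edge_closed_subset[OF Scl sub] unfolding A_def by blast
      then show ?thesis by blast
    next
      case False
      then have "C \<subseteq> S" using min[OF SV Scl] by blast
      have "edge_closed (F \<inter> pairs_on (V - C)) (S - C)"
        using Scl sub unfolding edge_closed_def pairs_on_def by blast
      then have "S - C \<in> A" using SV unfolding A_def by blast
      moreover have "S = C \<union> (S - C)" using \<open>C \<subseteq> S\<close> by blast
      ultimately show ?thesis by blast
    qed
  next
    fix S assume "S \<in> A \<union> (\<lambda>S. C \<union> S) ` A"
    then obtain S' where S': "S' \<subseteq> V - C" "edge_closed (F \<inter> pairs_on (V - C)) S'"
      and S: "S = S' \<or> S = C \<union> S'" unfolding A_def by blast
    have key: "e \<subseteq> C \<or> (e \<subseteq> V - C \<and> (e \<subseteq> S' \<or> e \<inter> S' = {}))" if "e \<in> F \<inter> pairs_on V" for e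
      using outside[OF that] S'(2) unfolding edge_closed_def pairs_on_def by blast
    have "edge_closed (F \<inter> pairs_on V) S'" "edge_closed (F \<inter> pairs_on V) (C \<union> S')"
      unfolding edge_closed_def using key S'(1) by blast+
    then show "S \<in> {S. S \<subseteq> V \<and> edge_closed (F \<inter> pairs_on V) S}" using S S'(1) CV by blast
  qed
qed

lemma power_add_ge_add_power:
  fixes a b :: real
  assumes "0 \<le> a" "0 \<le> b" "1 \<le> k"
  shows "a ^ k + b ^ k \<le> (a + b) ^ k"
  using assms(3)
proof (induction k rule: dec_induct)
  case (step k)
  have "a ^ Suc k + b ^ Suc k \<le> (a + b) * (a ^ k + b ^ k)"
    using assms(1,2) by (simp add: algebra_simps)
  also have "\<dots> \<le> (a + b) * (a + b) ^ k"
    using step.IH assms(1,2) by (intro mult_left_mono) auto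
  finally show ?case by simp
qed simp

text \<open>Summing over the sets \<open>S\<close> that are unions of components of \<open>F\<close> amounts to
  colouring every component with one of two colours of weights \<open>m1\<close> and \<open>m2\<close>.\<close>

definition component_split_sum :: "real \<Rightarrow> real \<Rightarrow> nat set set \<Rightarrow> nat set \<Rightarrow> real" where
  "component_split_sum m1 m2 F V = (\<Sum>S\<in>{S. S \<subseteq> V \<and> edge_closed (F \<inter> pairs_on V) S}.
      m1 ^ component_count F S * m2 ^ component_count F (V - S))"

lemma component_split_sum_empty [simp]: "component_split_sum m1 m2 F {} = 1"
proof -
  have "{S. S \<subseteq> {} \<and> edge_closed (F \<inter> pairs_on {}) S} = {{}}" by (auto simp: edge_closed_def)
  then show ?thesis unfolding component_split_sum_def by (simp add: component_count_def)
qed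

lemma component_split_sum_split:
  assumes finV: "finite V" and nc: "\<not> has_cycle F" and CV: "C \<subseteq> V" and Cne: "C \<noteq> {}"
    and Ccl: "edge_closed (F \<inter> pairs_on V) C"
    and min: "\<And>S. S \<subseteq> V \<Longrightarrow> edge_closed (F \<inter> pairs_on V) S \<Longrightarrow> C \<subseteq> S \<or> C \<inter> S = {}"
  shows "component_split_sum m1 m2 F V
    = (m1 ^ component_count F C + m2 ^ component_count F C) * component_split_sum m1 m2 F (V - C)"
proof -
  define A where "A = {S. S \<subseteq> V - C \<and> edge_closed (F \<inter> pairs_on (V - C)) S}"
  define t where "t W S = m1 ^ component_count F S * m2 ^ component_count F (W - S)" for W S
  define a where "a = component_count F C"
  have finC: "finite C" using finV CV finite_subset by blast
  have cc: "component_count F (C \<union> Y) = a + component_count F Y" if "Y \<subseteq> V - C" for Y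
    unfolding a_def
  proof (rule component_count_union[OF finC _ _ _ Ccl nc])
    show "finite Y" using finV that finite_subset by blast
  qed (use that CV in auto)
  have t_out: "t V S = m2 ^ a * t (V - C) S" if "S \<in> A" for S
  proof -
    have "V - S = C \<union> (V - C - S)" using CV that unfolding A_def by blast
    then show ?thesis unfolding t_def using cc[of "V - C - S"] by (simp add: power_add)
  qed
  have t_in: "t V (C \<union> S) = m1 ^ a * t (V - C) S" if "S \<in> A" for S
  proof -
    have "V - (C \<union> S) = V - C - S" by blast
    then show ?thesis unfolding t_def using cc[of S] that by (simp add: A_def power_add)
  qed
  have split: "{S. S \<subseteq> V \<and> edge_closed (F \<inter> pairs_on V) S} = A \<union> (\<lambda>S. C \<union> S) ` A"
    unfolding A_def by (rule edge_closed_sets_split[OF CV Ccl min])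
  have finA: "finite A" unfolding A_def using finV by simp
  have disj: "A \<inter> (\<lambda>S. C \<union> S) ` A = {}" using Cne unfolding A_def by blast
  have inj: "inj_on (\<lambda>S. C \<union> S) A" unfolding A_def by (rule inj_onI) blast
  have "component_split_sum m1 m2 F V = sum (t V) A + sum (t V) ((\<lambda>S. C \<union> S) ` A)"
    unfolding component_split_sum_def split t_def[symmetric]
    using finA disj by (intro sum.union_disjoint) auto
  also have "\<dots> = (m1 ^ a + m2 ^ a) * sum (t (V - C)) A"
    using t_in t_out by (simp add: sum.reindex[OF inj] sum_distrib_left algebra_simps)
  finally show ?thesis unfolding a_def A_def t_def component_split_sum_def .
qed

text \<open>A minimal nonempty closed set is a single component, so in fact equality holds; the
  proof only needs that its component count is positive.\<close>

lemma component_split_sum_le: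
  fixes m1 m2 :: real
  assumes "finite V" "\<not> has_cycle F" "0 \<le> m1" "0 \<le> m2"
  shows "component_split_sum m1 m2 F V \<le> (m1 + m2) ^ component_count F V"
  using assms(1)
proof (induction "card V" arbitrary: V rule: less_induct)
  case less
  show ?case
  proof (cases "V = {}")
    case False
    obtain C where CV: "C \<subseteq> V" and Cne: "C \<noteq> {}" and Ccl: "edge_closed (F \<inter> pairs_on V) C"
      and min: "\<And>S. S \<subseteq> V \<Longrightarrow> edge_closed (F \<inter> pairs_on V) S \<Longrightarrow> C \<subseteq> S \<or> C \<inter> S = {}"
      by (rule minimal_edge_closed_exists[OF less.prems False, of "F \<inter> pairs_on V"]) blast+
    define a where "a = component_count F C"
    have finC: "finite C" using less.prems CV finite_subset by blast
    have "\<not> has_cycle (F \<inter> pairs_on C)" using assms(2) has_cycle_mono by blast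
    then have "card (F \<inter> pairs_on C) < card C" using card_forest_less[OF finC Cne] by blast
    then have a: "1 \<le> a" unfolding a_def component_count_def by simp
    have "card (V - C) < card V" using less.prems CV Cne by (intro psubset_card_mono) auto
    then have IH: "component_split_sum m1 m2 F (V - C) \<le> (m1 + m2) ^ component_count F (V - C)"
      using less.hyps less.prems by blast
    have ccV: "component_count F V = a + component_count F (V - C)"
      using component_count_union[OF finC _ _ _ Ccl assms(2), of "V - C"] less.prems CV
      unfolding a_def by (simp add: Un_absorb1)
    have "0 \<le> component_split_sum m1 m2 F (V - C)"
      unfolding component_split_sum_def using assms(3,4) by (intro sum_nonneg) simp
    have "component_split_sum m1 m2 F V = (m1 ^ a + m2 ^ a) * component_split_sum m1 m2 F (V - C)"
      unfolding a_def by (rule component_split_sum_split[OF less.prems assms(2) CV Cne Ccl min])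
    also have "\<dots> \<le> (m1 + m2) ^ a * (m1 + m2) ^ component_count F (V - C)"
      using power_add_ge_add_power[OF assms(3,4) a] IH \<open>0 \<le> component_split_sum m1 m2 F (V - C)\<close> assms(3,4)
      by (intro mult_mono) auto
    also have "\<dots> = (m1 + m2) ^ component_count F V" unfolding ccV by (simp add: power_add)
    finally show ?thesis .
  qed (simp add: component_count_def)
qed

definition reachable_from :: "nat set set \<Rightarrow> nat \<Rightarrow> nat set" where
  "reachable_from F v = {w. (adj F)\<^sup>*\<^sup>* v w}"

definition components_le :: "nat set \<Rightarrow> real \<Rightarrow> nat set set \<Rightarrow> bool" where
  "components_le V r F \<longleftrightarrow> (\<forall>v\<in>V. real (card (reachable_from F v)) \<le> r)"

definition bounded_forests :: "nat set \<Rightarrow> real \<Rightarrow> nat set set set" where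
  "bounded_forests V r = {F. F \<subseteq> pairs_on V \<and> \<not> has_cycle F \<and> components_le V r F}"

text \<open>The exponent \<open>card V - card F\<close> is the number of components of the forest \<open>F\<close>.\<close>

definition forest_poly :: "nat set \<Rightarrow> real \<Rightarrow> real \<Rightarrow> real" where
  "forest_poly V r m = (\<Sum>F\<in>bounded_forests V r. m ^ (card V - card F))"

lemma finite_bounded_forests: "finite V \<Longrightarrow> finite (bounded_forests V r)"
  unfolding bounded_forests_def
  by (rule finite_subset[of _ "Pow (pairs_on V)"]) (auto simp: finite_pairs_on)

lemma forest_poly_nonneg: "0 \<le> m \<Longrightarrow> 0 \<le> forest_poly V r m"
  unfolding forest_poly_def by (intro sum_nonneg) auto

lemma reachable_from_subset: "F \<subseteq> pairs_on V \<Longrightarrow> v \<in> V \<Longrightarrow> reachable_from F v \<subseteq> V"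
  unfolding reachable_from_def using adj_rtranclp_in by blast

lemma reachable_from_empty: "reachable_from {} v = {v}"
  unfolding reachable_from_def by (auto simp: adj_rtranclp_empty)

lemma edge_closed_rtranclp:
  assumes "F \<subseteq> pairs_on V" "edge_closed F S" "v \<in> S" "(adj F)\<^sup>*\<^sup>* v w"
  shows "w \<in> S \<and> (adj (F \<inter> pairs_on S))\<^sup>*\<^sup>* v w"
  using assms(4)
proof (induction rule: rtranclp_induct)
  case base
  then show ?case using assms(3) by simp
next
  case (step y z)
  have yz: "{y, z} \<in> F" using step.hyps(2) unfolding adj_def .
  have "{y, z} \<subseteq> S \<or> {y, z} \<inter> S = {}" using assms(2) yz unfolding edge_closed_def by (rule bspec)
  then have "{y, z} \<subseteq> S" using step.IH by blast
  moreover have "card {y, z} = 2" using yz assms(1) unfolding pairs_on_def by (simp add: subset_iff)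
  ultimately have "{y, z} \<in> F \<inter> pairs_on S" using yz unfolding pairs_on_def by blast
  then have "adj (F \<inter> pairs_on S) y z" unfolding adj_def .
  then show ?case using step.IH \<open>{y, z} \<subseteq> S\<close> by (meson insert_subset rtranclp.rtrancl_into_rtrancl)
qed

lemma reachable_from_edge_closed:
  assumes "F \<subseteq> pairs_on V" "edge_closed F S" "v \<in> S"
  shows "reachable_from F v = reachable_from (F \<inter> pairs_on S) v"
  unfolding reachable_from_def
  using edge_closed_rtranclp[OF assms] adj_rtranclp_mono[of "F \<inter> pairs_on S" F] by blast

lemma components_le_split:
  assumes "F \<subseteq> pairs_on V" "edge_closed F S" "S \<subseteq> V"
  shows "components_le V r F \<longleftrightarrow>
    components_le S r (F \<inter> pairs_on S) \<and> components_le (V - S) r (F \<inter> pairs_on (V - S))"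
proof -
  have "V = S \<union> (V - S)" using assms(3) by blast
  moreover have "reachable_from F v = reachable_from (F \<inter> pairs_on S) v" if "v \<in> S" for v
    using reachable_from_edge_closed[OF assms(1,2) that] .
  moreover have "reachable_from F v = reachable_from (F \<inter> pairs_on (V - S)) v" if "v \<in> V - S" for v
    using reachable_from_edge_closed[OF assms(1) edge_closed_Diff[OF assms(1,2)] that] .
  ultimately show ?thesis unfolding components_le_def by (metis Un_iff)
qed

lemma has_cycle_edge_closed:
  assumes FV: "F \<subseteq> pairs_on V" and cl: "edge_closed F S" and L: "length vs \<ge> 3"
    and E: "\<forall>i < length vs. {vs ! i, vs ! ((i + 1) mod length vs)} \<in> F"
    and d: "distinct vs" and v0: "vs ! 0 \<in> S"
  shows "has_cycle (F \<inter> pairs_on S)"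
proof -
  have inS: "i < length vs \<Longrightarrow> vs ! i \<in> S" for i
  proof (induction i)
    case 0 then show ?case using v0 by simp
  next
    case (Suc i)
    then have "{vs ! i, vs ! Suc i} \<in> F" using E by (metis Suc_lessD Suc_eq_plus1 mod_less)
    then have "{vs ! i, vs ! Suc i} \<subseteq> S"
      using cl Suc unfolding edge_closed_def by (meson Suc_lessD disjoint_iff insertI1)
    then show ?case by simp
  qed
  show ?thesis unfolding has_cycle_def
  proof (intro exI[of _ vs] conjI allI impI)
    fix i assume i: "i < length vs"
    have "(i + 1) mod length vs < length vs" using L by (intro mod_less_divisor) linarith
    then have "{vs ! i, vs ! ((i + 1) mod length vs)} \<subseteq> S" using inS i by simp
    moreover have "{vs ! i, vs ! ((i + 1) mod length vs)} \<in> pairs_on V" using E FV i by blast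
    ultimately show "{vs ! i, vs ! ((i + 1) mod length vs)} \<in> F \<inter> pairs_on S"
      using E i unfolding pairs_on_def by blast
  qed (use L d in auto)
qed

lemma not_has_cycle_split:
  assumes FV: "F \<subseteq> pairs_on V" and cl: "edge_closed F S"
    and "\<not> has_cycle (F \<inter> pairs_on S)" "\<not> has_cycle (F \<inter> pairs_on (V - S))"
  shows "\<not> has_cycle F"
proof
  assume "has_cycle F"
  then obtain vs where L: "length vs \<ge> 3" and d: "distinct vs"
    and E: "\<forall>i < length vs. {vs ! i, vs ! ((i + 1) mod length vs)} \<in> F"
    unfolding has_cycle_def by blast
  have "vs ! 0 \<in> set vs" using L by (intro nth_mem) linarith
  then have "vs ! 0 \<in> S \<or> vs ! 0 \<in> V - S" using cycle_vertices_subset[OF FV L E] by blast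
  then show False
    using has_cycle_edge_closed[OF FV cl L E d] has_cycle_edge_closed[OF FV edge_closed_Diff[OF FV cl] L E d]
      assms(3,4) by blast
qed

lemma bounded_forests_restrict:
  assumes "F \<in> bounded_forests V r" "S \<subseteq> V" "edge_closed F S"
  shows "F \<inter> pairs_on S \<in> bounded_forests S r" "F \<inter> pairs_on (V - S) \<in> bounded_forests (V - S) r"
  using assms components_le_split[OF _ assms(3,2)] has_cycle_mono
  unfolding bounded_forests_def by blast+

lemma bounded_forests_Un:
  assumes SV: "S \<subseteq> V" and F1: "F1 \<in> bounded_forests S r" and F2: "F2 \<in> bounded_forests (V - S) r"
  shows "F1 \<union> F2 \<in> bounded_forests V r" "edge_closed (F1 \<union> F2) S"
    "(F1 \<union> F2) \<inter> pairs_on S = F1" "(F1 \<union> F2) \<inter> pairs_on (V - S) = F2"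
proof -
  have F1p: "F1 \<subseteq> pairs_on S" and F2p: "F2 \<subseteq> pairs_on (V - S)"
    using F1 F2 unfolding bounded_forests_def by auto
  show e1: "(F1 \<union> F2) \<inter> pairs_on S = F1" and e2: "(F1 \<union> F2) \<inter> pairs_on (V - S) = F2"
    using F1p F2p pairs_on_disjoint[of S "V - S"] by blast+
  have Up: "F1 \<union> F2 \<subseteq> pairs_on V"
    using F1p F2p pairs_on_mono[of S V] pairs_on_mono[of "V - S" V] SV by blast
  show cl: "edge_closed (F1 \<union> F2) S"
    using F1p F2p unfolding edge_closed_def pairs_on_def by blast
  have "\<not> has_cycle (F1 \<union> F2)"
    using not_has_cycle_split[OF Up cl] e1 e2 F1 F2 unfolding bounded_forests_def by auto
  moreover have "components_le V r (F1 \<union> F2)"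
    using components_le_split[OF Up cl SV] e1 e2 F1 F2 unfolding bounded_forests_def by auto
  ultimately show "F1 \<union> F2 \<in> bounded_forests V r" using Up unfolding bounded_forests_def by blast
qed

lemma bij_betw_forest_pairs:
  "bij_betw (\<lambda>(S, F1, F2). (F1 \<union> F2, S))
     (SIGMA S:Pow V. bounded_forests S r \<times> bounded_forests (V - S) r)
     (SIGMA F:bounded_forests V r. {S. S \<subseteq> V \<and> edge_closed F S})"
proof (rule bij_betw_byWitness[where f' = "\<lambda>(F, S). (S, F \<inter> pairs_on S, F \<inter> pairs_on (V - S))"])
  show "\<forall>b\<in>SIGMA F:bounded_forests V r. {S. S \<subseteq> V \<and> edge_closed F S}.
      (\<lambda>(S, F1, F2). (F1 \<union> F2, S)) ((\<lambda>(F, S). (S, F \<inter> pairs_on S, F \<inter> pairs_on (V - S))) b) = b"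
    using edge_closed_partition by (auto simp: bounded_forests_def)
qed (auto simp: bounded_forests_Un bounded_forests_restrict)

lemma forest_poly_split:
  fixes m1 m2 :: real
  assumes finV: "finite V" and m1: "0 \<le> m1" and m2: "0 \<le> m2"
  shows "(\<Sum>S\<in>Pow V. forest_poly S r m1 * forest_poly (V - S) r m2) \<le> forest_poly V r (m1 + m2)"
proof -
  define g :: "nat set \<times> nat set set \<times> nat set set \<Rightarrow> real"
    where "g = (\<lambda>(S, F1, F2). m1 ^ (card S - card F1) * m2 ^ (card (V - S) - card F2))"
  define h :: "nat set set \<times> nat set \<Rightarrow> real"
    where "h = (\<lambda>(F, S). m1 ^ component_count F S * m2 ^ component_count F (V - S))"
  have fin: "finite (bounded_forests S r)" if "S \<subseteq> V" for S
    using finite_bounded_forests finV that finite_subset by blast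
  have "(\<Sum>S\<in>Pow V. forest_poly S r m1 * forest_poly (V - S) r m2)
      = (\<Sum>S\<in>Pow V. \<Sum>p\<in>bounded_forests S r \<times> bounded_forests (V - S) r. g (S, p))"
    unfolding forest_poly_def sum_product g_def by (subst sum.cartesian_product) simp
  also have "\<dots> = sum g (SIGMA S:Pow V. bounded_forests S r \<times> bounded_forests (V - S) r)"
    by (subst sum.Sigma) (use finV fin in auto)
  also have "\<dots> = (\<Sum>x\<in>(SIGMA S:Pow V. bounded_forests S r \<times> bounded_forests (V - S) r).
      h ((\<lambda>(S, F1, F2). (F1 \<union> F2, S)) x))"
    by (rule sum.cong) (auto simp: g_def h_def component_count_def bounded_forests_Un(3,4))
  also have "\<dots> = sum h (SIGMA F:bounded_forests V r. {S. S \<subseteq> V \<and> edge_closed F S})"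
    by (rule sum.reindex_bij_betw[OF bij_betw_forest_pairs])
  also have "\<dots> = (\<Sum>F\<in>bounded_forests V r. \<Sum>S\<in>{S. S \<subseteq> V \<and> edge_closed F S}. h (F, S))"
    by (subst sum.Sigma) (use finite_bounded_forests[OF finV] finV in auto)
  also have "\<dots> = (\<Sum>F\<in>bounded_forests V r. component_split_sum m1 m2 F V)"
  proof (rule sum.cong[OF refl])
    fix F assume "F \<in> bounded_forests V r"
    then have "F \<inter> pairs_on V = F" unfolding bounded_forests_def by blast
    then show "(\<Sum>S\<in>{S. S \<subseteq> V \<and> edge_closed F S}. h (F, S)) = component_split_sum m1 m2 F V"
      unfolding component_split_sum_def h_def by simp
  qed
  also have "\<dots> \<le> (\<Sum>F\<in>bounded_forests V r. (m1 + m2) ^ component_count F V)"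
    using component_split_sum_le[OF finV _ m1 m2] by (intro sum_mono) (auto simp: bounded_forests_def)
  also have "\<dots> = forest_poly V r (m1 + m2)"
    unfolding forest_poly_def component_count_def
    by (intro sum.cong) (auto simp: bounded_forests_def Int_absorb2)
  finally show ?thesis .
qed

definition map_edges :: "(nat \<Rightarrow> nat) \<Rightarrow> nat set set \<Rightarrow> nat set set" where
  "map_edges f F = (\<lambda>e. f ` e) ` F"

lemma map_edges_pairs_on:
  assumes "inj_on f V" "F \<subseteq> pairs_on V"
  shows "map_edges f F \<subseteq> pairs_on (f ` V)"
proof
  fix e' assume "e' \<in> map_edges f F"
  then obtain e where e: "e \<in> F" "e' = f ` e" unfolding map_edges_def by blast
  then have "e \<subseteq> V" "card e = 2" using assms(2) unfolding pairs_on_def by auto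
  then have "card (f ` e) = 2" using assms(1) by (metis card_image inj_on_subset)
  then show "e' \<in> pairs_on (f ` V)" using e \<open>e \<subseteq> V\<close> unfolding pairs_on_def by blast
qed

lemma card_map_edges:
  assumes "inj_on f V" "F \<subseteq> pairs_on V"
  shows "card (map_edges f F) = card F"
proof -
  have "inj_on (\<lambda>e. f ` e) F"
  proof (rule inj_onI)
    fix x y assume "x \<in> F" "y \<in> F" "f ` x = f ` y"
    then show "x = y" using inj_on_image_eq_iff[OF assms(1)] assms(2) unfolding pairs_on_def by blast
  qed
  then show ?thesis unfolding map_edges_def by (rule card_image)
qed

lemma map_edges_inverse:
  assumes "\<forall>x\<in>V. g (f x) = x" "F \<subseteq> pairs_on V"
  shows "map_edges g (map_edges f F) = F"
proof -
  have "(\<lambda>e. g ` f ` e) ` F = (\<lambda>e. e) ` F"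
  proof (rule image_cong[OF refl])
    fix e assume "e \<in> F"
    then have "e \<subseteq> V" using assms(2) unfolding pairs_on_def by auto
    then show "g ` f ` e = e" using assms(1) by (force simp: image_image)
  qed
  then show ?thesis unfolding map_edges_def image_image by simp
qed

lemma has_cycle_map_edges:
  assumes inj: "inj_on f V" and FV: "F \<subseteq> pairs_on V" and hc: "has_cycle F"
  shows "has_cycle (map_edges f F)"
proof -
  obtain vs where L: "length vs \<ge> 3" and d: "distinct vs"
    and E: "\<forall>i < length vs. {vs ! i, vs ! ((i + 1) mod length vs)} \<in> F"
    using hc unfolding has_cycle_def by blast
  have sv: "set vs \<subseteq> V" using cycle_vertices_subset[OF FV L E] .
  show ?thesis unfolding has_cycle_def
  proof (intro exI[of _ "map f vs"] conjI allI impI)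
    show "3 \<le> length (map f vs)" using L by simp
    show "distinct (map f vs)" using d inj sv by (simp add: distinct_map inj_on_subset)
    fix i assume i: "i < length (map f vs)"
    have m: "(i + 1) mod length vs < length vs" using L by (intro mod_less_divisor) linarith
    have "{vs ! i, vs ! ((i + 1) mod length vs)} \<in> F" using E i by simp
    then have "f ` {vs ! i, vs ! ((i + 1) mod length vs)} \<in> map_edges f F"
      unfolding map_edges_def by (rule imageI)
    then show "{map f vs ! i, map f vs ! ((i + 1) mod length (map f vs))} \<in> map_edges f F"
      using i m by simp
  qed
qed

lemma rtranclp_map_edges:
  assumes "(adj F)\<^sup>*\<^sup>* a b"
  shows "(adj (map_edges f F))\<^sup>*\<^sup>* (f a) (f b)"
  using assms
proof (induction rule: rtranclp_induct)
  case (step y z)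
  have "{y, z} \<in> F" using step.hyps(2) unfolding adj_def by simp
  then have "f ` {y, z} \<in> map_edges f F" unfolding map_edges_def by blast
  then have "adj (map_edges f F) (f y) (f z)" unfolding adj_def by simp
  with step.IH show ?case by (rule rtranclp.rtrancl_into_rtrancl)
qed simp

lemma reachable_from_map_edges:
  assumes bf: "bij_betw f V W" and FV: "F \<subseteq> pairs_on V" and v: "v \<in> V"
  shows "reachable_from (map_edges f F) (f v) = f ` reachable_from F v"
proof
  define g where "g = inv_into V f"
  have gf: "\<forall>x\<in>V. g (f x) = x" unfolding g_def using bf by (simp add: bij_betw_def)
  have injf: "inj_on f V" and fV: "f ` V = W" using bf by (auto simp: bij_betw_def)
  have PW: "map_edges f F \<subseteq> pairs_on W" using map_edges_pairs_on[OF injf FV] fV by simp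
  show "reachable_from (map_edges f F) (f v) \<subseteq> f ` reachable_from F v"
  proof
    fix c assume "c \<in> reachable_from (map_edges f F) (f v)"
    then have rc: "(adj (map_edges f F))\<^sup>*\<^sup>* (f v) c" unfolding reachable_from_def by simp
    then have "c \<in> W" using adj_rtranclp_in[OF PW] v fV by blast
    then have c: "c = f (g c)" using bf unfolding g_def by (simp add: bij_betw_def f_inv_into_f)
    have "(adj (map_edges g (map_edges f F)))\<^sup>*\<^sup>* (g (f v)) (g c)" using rtranclp_map_edges[OF rc] .
    then have "(adj F)\<^sup>*\<^sup>* v (g c)" using map_edges_inverse[where g = g and f = f, OF gf FV] v gf by simp
    then show "c \<in> f ` reachable_from F v" using c unfolding reachable_from_def by blast
  qed
  show "f ` reachable_from F v \<subseteq> reachable_from (map_edges f F) (f v)"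
    unfolding reachable_from_def using rtranclp_map_edges by blast
qed

lemma bounded_forests_map_edges:
  assumes bf: "bij_betw f V W" and F: "F \<in> bounded_forests V r"
  shows "map_edges f F \<in> bounded_forests W r"
proof -
  define g where "g = inv_into V f"
  have gf: "\<forall>x\<in>V. g (f x) = x" unfolding g_def using bf by (simp add: bij_betw_def)
  have injf: "inj_on f V" and fV: "f ` V = W" using bf by (auto simp: bij_betw_def)
  have injg: "inj_on g W" using bij_betw_inv_into[OF bf] unfolding g_def bij_betw_def by blast
  have FV: "F \<subseteq> pairs_on V" and nc: "\<not> has_cycle F" and sm: "components_le V r F"
    using F unfolding bounded_forests_def by auto
  have PW: "map_edges f F \<subseteq> pairs_on W" using map_edges_pairs_on[OF injf FV] fV by simp
  have "\<not> has_cycle (map_edges f F)"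
    using has_cycle_map_edges[OF injg PW] map_edges_inverse[where g = g and f = f, OF gf FV] nc by auto
  moreover have "components_le W r (map_edges f F)" unfolding components_le_def
  proof
    fix w assume "w \<in> W"
    then obtain v where v: "v \<in> V" "w = f v" using fV by blast
    have "card (reachable_from (map_edges f F) w) = card (reachable_from F v)"
      using reachable_from_map_edges[OF bf FV v(1)] reachable_from_subset[OF FV v(1)] injf v(2)
      by (simp add: card_image inj_on_subset)
    then show "real (card (reachable_from (map_edges f F) w)) \<le> r"
      using sm v unfolding components_le_def by simp
  qed
  ultimately show ?thesis using PW unfolding bounded_forests_def by blast
qed

lemma forest_poly_bij_betw:
  assumes bf: "bij_betw f V W"
  shows "forest_poly V r m = forest_poly W r m"
  unfolding forest_poly_def
proof (rule sum.reindex_bij_witness[where i = "map_edges (inv_into V f)" and j = "map_edges f"])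
  have gf: "\<forall>x\<in>V. inv_into V f (f x) = x" using bf by (simp add: bij_betw_def)
  have fg: "\<forall>y\<in>W. f (inv_into V f y) = y" using bf by (simp add: bij_betw_def f_inv_into_f)
  have bg: "bij_betw (inv_into V f) W V" using bf by (rule bij_betw_inv_into)
  have injf: "inj_on f V" using bf bij_betw_def by auto
  fix a assume "a \<in> bounded_forests V r"
  then have aV: "a \<subseteq> pairs_on V" unfolding bounded_forests_def by auto
  show "map_edges (inv_into V f) (map_edges f a) = a" using map_edges_inverse[where g = "inv_into V f" and f = f, OF gf aV] .
  show "map_edges f a \<in> bounded_forests W r" using bounded_forests_map_edges[OF bf] \<open>a \<in> _\<close> .
  show "m ^ (card W - card (map_edges f a)) = m ^ (card V - card a)"
    using card_map_edges[OF injf aV] bij_betw_same_card[OF bf] by simp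
next
  have fg: "\<forall>y\<in>W. f (inv_into V f y) = y" using bf by (simp add: bij_betw_def f_inv_into_f)
  have bg: "bij_betw (inv_into V f) W V" using bf by (rule bij_betw_inv_into)
  fix b assume "b \<in> bounded_forests W r"
  then have bW: "b \<subseteq> pairs_on W" unfolding bounded_forests_def by auto
  show "map_edges f (map_edges (inv_into V f) b) = b" using map_edges_inverse[where g = f and f = "inv_into V f", OF fg bW] .
  show "map_edges (inv_into V f) b \<in> bounded_forests V r"
    using bounded_forests_map_edges[OF bg] \<open>b \<in> _\<close> .
qed

lemma forest_poly_card: "finite S \<Longrightarrow> forest_poly S r m = forest_poly {1..card S} r m"
  by (metis ex_bij_betw_nat_finite_1 forest_poly_bij_betw)

lemma forest_poly_superadditive:
  fixes m1 m2 :: real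
  assumes "0 \<le> m1" "0 \<le> m2"
  shows "real ((n1 + n2) choose n1) * forest_poly {1..n1} r m1 * forest_poly {1..n2} r m2
         \<le> forest_poly {1..n1 + n2} r (m1 + m2)"
proof -
  define V where "V = {1..n1 + n2}"
  have finV: "finite V" and cV: "card V = n1 + n2" unfolding V_def by simp_all
  define K where "K = {S. S \<subseteq> V \<and> card S = n1}"
  have "real ((n1 + n2) choose n1) * forest_poly {1..n1} r m1 * forest_poly {1..n2} r m2
      = (\<Sum>S\<in>K. forest_poly {1..n1} r m1 * forest_poly {1..n2} r m2)"
    unfolding K_def using n_subsets[OF finV, of n1] cV by simp
  also have "\<dots> = (\<Sum>S\<in>K. forest_poly S r m1 * forest_poly (V - S) r m2)"
  proof (rule sum.cong[OF refl])
    fix S assume "S \<in> K"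
    then have "S \<subseteq> V" "card S = n1" unfolding K_def by auto
    moreover have "card (V - S) = n2" using calculation finV cV by (simp add: card_Diff_subset finite_subset)
    ultimately show "forest_poly {1..n1} r m1 * forest_poly {1..n2} r m2
        = forest_poly S r m1 * forest_poly (V - S) r m2"
      using forest_poly_card finV finite_subset by (metis finite_Diff)
  qed
  also have "\<dots> \<le> (\<Sum>S\<in>Pow V. forest_poly S r m1 * forest_poly (V - S) r m2)"
    by (rule sum_mono2) (use finV K_def forest_poly_nonneg assms in auto)
  also have "\<dots> \<le> forest_poly V r (m1 + m2)" using forest_poly_split[OF finV assms] .
  finally show ?thesis unfolding V_def .
qed

lemma empty_in_bounded_forests: "1 \<le> r \<Longrightarrow> {} \<in> bounded_forests V r"
  unfolding bounded_forests_def components_le_def by (simp add: reachable_from_empty)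

lemma bounded_forests_mono: "r \<le> r' \<Longrightarrow> bounded_forests V r \<subseteq> bounded_forests V r'"
  unfolding bounded_forests_def components_le_def by force

lemma bounded_forests_eq_forests:
  assumes "finite V" "real (card V) \<le> r"
  shows "bounded_forests V r = {F. F \<subseteq> pairs_on V \<and> \<not> has_cycle F}"
proof -
  have "components_le V r F" if "F \<subseteq> pairs_on V" for F
    unfolding components_le_def
  proof
    fix v assume "v \<in> V"
    then have "card (reachable_from F v) \<le> card V"
      using reachable_from_subset[OF that] assms(1) by (intro card_mono)
    then show "real (card (reachable_from F v)) \<le> r" using assms(2) by linarith
  qed
  then show ?thesis unfolding bounded_forests_def by blast
qed

lemma forest_poly_pos:
  assumes "finite V" "0 < m" "1 \<le> r"
  shows "0 < forest_poly V r m"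
proof -
  have "m ^ (card V - card ({} :: nat set set)) \<le> forest_poly V r m"
    unfolding forest_poly_def using assms empty_in_bounded_forests finite_bounded_forests
    by (intro member_le_sum) auto
  moreover have "0 < m ^ (card V - card ({} :: nat set set))" using assms(2) by simp
  ultimately show ?thesis by linarith
qed

lemma forest_poly_mono_r:
  assumes "finite V" "0 \<le> m" "r \<le> r'"
  shows "forest_poly V r m \<le> forest_poly V r' m"
  unfolding forest_poly_def
  by (rule sum_mono2) (use assms finite_bounded_forests bounded_forests_mono in auto)

lemma forest_poly_mono:
  assumes "0 \<le> m" "m \<le> m'"
  shows "forest_poly V r m \<le> forest_poly V r m'"
  unfolding forest_poly_def by (rule sum_mono) (use assms in \<open>auto intro: power_mono\<close>)

lemma forest_poly_scale:
  assumes "0 \<le> m'" "m' \<le> m" "0 < m"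
  shows "(m' / m) ^ card V * forest_poly V r m \<le> forest_poly V r m'"
  unfolding forest_poly_def sum_distrib_left
proof (rule sum_mono)
  fix F
  define k where "k = card V - card F"
  have q: "0 \<le> m' / m" "m' / m \<le> 1" using assms by auto
  have "(m' / m) ^ card V * m ^ k \<le> (m' / m) ^ k * m ^ k"
    using power_decreasing[OF _ q, of k "card V"] assms by (intro mult_right_mono) (auto simp: k_def)
  also have "\<dots> = m' ^ k" using assms by (simp add: power_divide)
  finally show "(m' / m) ^ card V * m ^ (card V - card F) \<le> m' ^ (card V - card F)"
    unfolding k_def .
qed

lemma sum_power_card_Pow:
  fixes x :: real
  assumes "finite W"
  shows "(\<Sum>S\<in>Pow W. x ^ card S) = (1 + x) ^ card W"
  using prod_add[OF assms, of "\<lambda>_. x" "\<lambda>_. 1"] by (simp add: add.commute)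

lemma weight_sum_bounded_forests:
  assumes "finite V" "0 < x"
  shows "(\<Sum>F\<in>bounded_forests V r. x ^ card F) = x ^ card V * forest_poly V r (1 / x)"
  unfolding forest_poly_def sum_distrib_left
proof (rule sum.cong[OF refl])
  fix F assume "F \<in> bounded_forests V r"
  then have "card F \<le> card V" using card_forest_le[OF assms(1)] unfolding bounded_forests_def by auto
  then show "x ^ card F = x ^ card V * (1 / x) ^ (card V - card F)"
    using assms(2) by (simp add: power_diff power_one_over)
qed

lemma forest_poly_le:
  assumes "finite V" "0 < m"
  shows "forest_poly V r m \<le> m ^ card V * (1 + 1 / m) ^ card (pairs_on V)"
proof -
  have "forest_poly V r m = m ^ card V * (\<Sum>F\<in>bounded_forests V r. (1 / m) ^ card F)"
    using weight_sum_bounded_forests[of V "1 / m" r] assms by (simp add: power_one_over)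
  also have "\<dots> \<le> m ^ card V * (\<Sum>F\<in>Pow (pairs_on V). (1 / m) ^ card F)"
    using assms finite_pairs_on[OF assms(1)]
    by (intro mult_left_mono sum_mono2) (auto simp: bounded_forests_def)
  also have "\<dots> = m ^ card V * (1 + 1 / m) ^ card (pairs_on V)"
    using sum_power_card_Pow[OF finite_pairs_on[OF assms(1)]] by simp
  finally show ?thesis .
qed

section \<open>Superadditive sequences and factorials\<close>

lemma superadditive_mult:
  fixes a :: "nat \<Rightarrow> real"
  assumes sup: "\<And>m n. 1 \<le> m \<Longrightarrow> 1 \<le> n \<Longrightarrow> a m + a n \<le> a (m + n)"
    and "1 \<le> k" "1 \<le> q"
  shows "real q * a k \<le> a (q * k)"
  using assms(3)
proof (induction q rule: dec_induct)
  case (step q)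
  have "real (Suc q) * a k \<le> a (q * k) + a k" using step.IH by (simp add: algebra_simps)
  also have "\<dots> \<le> a (q * k + k)" using sup[of "q * k" k] step.hyps assms(2) by simp
  finally show ?case by (simp add: add.commute)
qed simp

lemma superadditive_blocks:
  fixes a :: "nat \<Rightarrow> real"
  assumes sup: "\<And>m n. 1 \<le> m \<Longrightarrow> 1 \<le> n \<Longrightarrow> a m + a n \<le> a (m + n)" and k: "1 \<le> k" and n: "1 \<le> n"
  shows "real (n div k) * a k + Min (insert 0 (a ` {1..<k})) \<le> a n"
proof -
  define c0 where "c0 = Min (insert 0 (a ` {1..<k}))"
  have c0: "c0 \<le> 0" "\<And>s. s \<in> {1..<k} \<Longrightarrow> c0 \<le> a s"
    unfolding c0_def by (rule Min_le; simp)+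
  define q where "q = n div k"
  define s where "s = n mod k"
  have ns: "n = q * k + s" and sk: "s < k" unfolding q_def s_def using k by simp_all
  have "real q * a k + c0 \<le> a n"
  proof (cases "q = 0")
    case True
    then show ?thesis using c0(2)[of n] n ns sk by simp
  next
    case False
    then have aq: "real q * a k \<le> a (q * k)" using superadditive_mult[OF sup k] by simp
    show ?thesis
    proof (cases "s = 0")
      case True
      then show ?thesis using aq ns c0(1) by simp
    next
      case False
      have "a (q * k) + a s \<le> a n" using sup[of "q * k" s] ns False k \<open>q \<noteq> 0\<close> by simp
      then show ?thesis using aq c0(2)[of s] False sk by simp
    qed
  qed
  then show ?thesis unfolding q_def c0_def .
qed

lemma superadditive_lower_bound:
  fixes a :: "nat \<Rightarrow> real"
  assumes sup: "\<And>m n. 1 \<le> m \<Longrightarrow> 1 \<le> n \<Longrightarrow> a m + a n \<le> a (m + n)" and k: "1 \<le> k"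
  obtains c where "\<And>n. 1 \<le> n \<Longrightarrow> real n * (a k / real k) - c \<le> a n"
proof
  define A where "A = a k / real k"
  define c0 where "c0 = Min (insert 0 (a ` {1..<k}))"
  fix n :: nat assume n: "1 \<le> n"
  define q where "q = n div k"
  define s where "s = n mod k"
  have ns: "n = q * k + s" and sk: "s < k" unfolding q_def s_def using k by simp_all
  have qk: "real n - real k \<le> real q * real k" "real q * real k \<le> real n"
    using ns sk by (simp_all add: of_nat_mult[symmetric] del: of_nat_mult)
  have "real n * A - real k * \<bar>A\<bar> \<le> (real q * real k) * A"
  proof (cases "0 \<le> A")
    case True
    then have "(real n - real k) * A \<le> (real q * real k) * A" using qk by (intro mult_right_mono) auto
    then show ?thesis using True by (simp add: algebra_simps)
  next
    case False
    then have "real n * A \<le> (real q * real k) * A" using qk by (intro mult_right_mono_neg) auto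
    moreover have "0 \<le> real k * \<bar>A\<bar>" by simp
    ultimately show ?thesis by linarith
  qed
  also have "\<dots> = real q * a k" unfolding A_def using k by simp
  finally show "real n * (a k / real k) - (real k * \<bar>A\<bar> - c0) \<le> a n"
    using superadditive_blocks[OF sup k n] unfolding A_def c0_def q_def by linarith
qed

lemma fekete_superadditive:
  fixes a :: "nat \<Rightarrow> real"
  assumes sup: "\<And>m n. 1 \<le> m \<Longrightarrow> 1 \<le> n \<Longrightarrow> a m + a n \<le> a (m + n)"
    and bnd: "\<And>n. 1 \<le> n \<Longrightarrow> a n \<le> real n * M"
  shows "(\<lambda>n. a n / real n) \<longlonglongrightarrow> (SUP n\<in>{1..}. a n / real n)"
    and "1 \<le> n \<Longrightarrow> a n / real n \<le> (SUP n\<in>{1..}. a n / real n)"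
proof -
  have bdd: "bdd_above ((\<lambda>n. a n / real n) ` {1..})"
    by (rule bdd_aboveI[of _ M]) (use bnd in \<open>auto simp: divide_le_eq mult.commute\<close>)
  show up: "a n / real n \<le> (SUP n\<in>{1..}. a n / real n)" if "1 \<le> n" for n
    by (rule cSUP_upper[OF _ bdd]) (use that in auto)
  show "(\<lambda>n. a n / real n) \<longlonglongrightarrow> (SUP n\<in>{1..}. a n / real n)"
  proof (rule order_tendstoI)
    fix y assume "(SUP n\<in>{1..}. a n / real n) < y"
    then show "\<forall>\<^sub>F n in sequentially. a n / real n < y"
      using up unfolding eventually_sequentially by (meson le_less_trans)
  next
    fix y assume "y < (SUP n\<in>{1..}. a n / real n)"
    then obtain k where k: "1 \<le> k" and yk: "y < a k / real k"
      using less_cSUP_iff[OF _ bdd] by auto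
    obtain c where c: "\<And>n. 1 \<le> n \<Longrightarrow> real n * (a k / real k) - c \<le> a n"
      using superadditive_lower_bound[OF sup k] by blast
    have "(\<lambda>n. a k / real k - c / real n) \<longlonglongrightarrow> a k / real k - 0"
      by (intro tendsto_diff tendsto_const tendsto_divide_0[OF tendsto_const]
          filterlim_at_top_imp_at_infinity[OF filterlim_real_sequentially])
    then have "\<forall>\<^sub>F n in sequentially. y < a k / real k - c / real n"
      using yk by (intro order_tendstoD) auto
    moreover have "a k / real k - c / real n \<le> a n / real n" if "1 \<le> n" for n
    proof -
      have "(real n * (a k / real k) - c) / real n \<le> a n / real n"
        using c[OF that] by (intro divide_right_mono) auto
      then show ?thesis using that by (simp add: field_simps)
    qed
    then have "\<forall>\<^sub>F n in sequentially. a k / real k - c / real n \<le> a n / real n"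
      unfolding eventually_sequentially by blast
    ultimately show "\<forall>\<^sub>F n in sequentially. y < a n / real n"
      by eventually_elim linarith
  qed
qed

lemma root_eq_exp_ln: "1 \<le> n \<Longrightarrow> 0 < x \<Longrightarrow> root n x = exp (ln x / real n)"
  using ln_root[of n x] by (metis exp_ln gr0I not_one_le_zero real_root_gt_zero)

lemma supermultiplicative_root_convergent:
  fixes b :: "nat \<Rightarrow> real"
  assumes pos: "\<And>n. 1 \<le> n \<Longrightarrow> 0 < b n"
    and sup: "\<And>m n. 1 \<le> m \<Longrightarrow> 1 \<le> n \<Longrightarrow> b m * b n \<le> b (m + n)"
    and bnd: "\<And>n. 1 \<le> n \<Longrightarrow> b n \<le> C ^ n"
  shows "\<exists>l. (\<lambda>n. root n (b n)) \<longlonglongrightarrow> l \<and> (\<forall>n\<ge>1. root n (b n) \<le> l)"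
proof -
  define a where "a n = ln (b n)" for n
  have C: "0 < C" using pos[of 1] bnd[of 1] by simp
  have "a m + a n \<le> a (m + n)" if "1 \<le> m" "1 \<le> n" for m n
  proof -
    have "ln (b m * b n) \<le> ln (b (m + n))"
      using sup[OF that] pos that by (subst ln_le_cancel_iff) (auto intro: mult_pos_pos)
    moreover have "ln (b m * b n) = ln (b m) + ln (b n)" using pos that by (intro ln_mult_pos) auto
    ultimately show ?thesis unfolding a_def by simp
  qed
  moreover have "a n \<le> real n * ln C" if "1 \<le> n" for n
    unfolding a_def using bnd[OF that] pos[OF that] C by (simp add: ln_realpow[symmetric])
  ultimately have lim: "(\<lambda>n. a n / real n) \<longlonglongrightarrow> (SUP n\<in>{1..}. a n / real n)"
    and up: "\<And>n. 1 \<le> n \<Longrightarrow> a n / real n \<le> (SUP n\<in>{1..}. a n / real n)"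
    using fekete_superadditive[of a "ln C"] by blast+
  have root: "root n (b n) = exp (a n / real n)" if "1 \<le> n" for n
    unfolding a_def using root_eq_exp_ln[OF that pos[OF that]] .
  have "(\<lambda>n. exp (a n / real n)) \<longlonglongrightarrow> exp (SUP n\<in>{1..}. a n / real n)"
    by (rule tendsto_exp[OF lim])
  then have "(\<lambda>n. root n (b n)) \<longlonglongrightarrow> exp (SUP n\<in>{1..}. a n / real n)"
    by (rule Lim_transform_eventually)
      (use root in \<open>auto simp: eventually_sequentially intro!: exI[of _ 1]\<close>)
  moreover have "\<forall>n\<ge>1. root n (b n) \<le> exp (SUP n\<in>{1..}. a n / real n)"
    using root up by simp
  ultimately show ?thesis by blast
qed

lemma power_div_fact_le_exp:
  fixes x :: real
  assumes "0 \<le> x"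
  shows "x ^ n / fact n \<le> exp x"
proof -
  have s: "(\<lambda>k. x ^ k /\<^sub>R fact k) sums exp x" by (rule exp_converges)
  have "sum (\<lambda>k. x ^ k /\<^sub>R fact k) {n} \<le> suminf (\<lambda>k. x ^ k /\<^sub>R fact k)"
    by (rule sum_le_suminf) (use s sums_summable assms in auto)
  then show ?thesis using sums_unique[OF s] by (simp add: divide_inverse_commute)
qed

lemma exp_one_le_one_plus_inverse_power:
  assumes "1 \<le> n"
  shows "exp 1 \<le> (1 + 1 / real n) ^ (n + 1)"
proof -
  have n0: "0 < real n" using assms by simp
  have "ln (real n / (real n + 1)) \<le> real n / (real n + 1) - 1"
    using n0 by (intro ln_le_minus_one) auto
  moreover have "ln (real n / (real n + 1)) = - ln (1 + 1 / real n)"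
    using n0 by (simp add: ln_div field_simps)
  ultimately have "1 \<le> real (n + 1) * ln (1 + 1 / real n)"
    using n0 by (simp add: field_simps)
  then have "exp 1 \<le> exp (real (n + 1) * ln (1 + 1 / real n))" by simp
  also have "\<dots> = exp (ln (1 + 1 / real n)) ^ (n + 1)" by (rule exp_of_nat_mult)
  also have "\<dots> = (1 + 1 / real n) ^ (n + 1)"
    using n0 by (simp add: add_pos_pos)
  finally show ?thesis .
qed

lemma fact_le_exp_power:
  assumes "1 \<le> n"
  shows "fact n \<le> exp 1 * real n ^ (n + 1) / exp (real n)"
  using assms
proof (induction n rule: dec_induct)
  case (step n)
  have n0: "0 < real n" using step.hyps by simp
  have key: "exp 1 * real n ^ (n + 1) \<le> (real n + 1) ^ (n + 1)"
    using exp_one_le_one_plus_inverse_power[OF step.hyps(1)] n0 by (simp add: field_simps power_divide)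
  have "fact (Suc n) = (real n + 1) * fact n" by simp
  also have "\<dots> \<le> (real n + 1) * (exp 1 * real n ^ (n + 1) / exp (real n))"
    using step.IH by (intro mult_left_mono) auto
  also have "\<dots> \<le> (real n + 1) * ((real n + 1) ^ (n + 1) / exp (real n))"
    using key by (intro mult_left_mono divide_right_mono) auto
  also have "\<dots> = exp 1 * real (Suc n) ^ (Suc n + 1) / exp (real (Suc n))"
    by (simp add: exp_add field_simps)
  finally show ?case .
qed simp

lemma root_fact_div_tendsto: "(\<lambda>n. root n (fact n) / real n) \<longlonglongrightarrow> exp (-1)"
proof (rule tendsto_sandwich[of "\<lambda>n. exp (-1)" _ _ "\<lambda>n. root n (exp 1) * root n (real n) * exp (-1)"])
  show "\<forall>\<^sub>F n in sequentially. exp (-1) \<le> root n (fact n) / real n"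
    unfolding eventually_sequentially
  proof (intro exI[of _ 1] allI impI)
    fix n :: nat assume n: "1 \<le> n"
    have "real n ^ n \<le> exp (real n) * fact n"
      using power_div_fact_le_exp[of "real n" n] by (simp add: divide_le_eq)
    then have "(real n * exp (-1)) ^ n \<le> fact n"
      by (simp add: power_mult_distrib exp_of_nat_mult[symmetric] exp_minus field_simps)
    then have "root n ((real n * exp (-1)) ^ n) \<le> root n (fact n)"
      using n by (intro real_root_le_mono) auto
    then show "exp (-1) \<le> root n (fact n) / real n"
      using n by (simp add: real_root_power_cancel le_divide_eq mult.commute)
  qed
  show "\<forall>\<^sub>F n in sequentially. root n (fact n) / real n \<le> root n (exp 1) * root n (real n) * exp (-1)"
    unfolding eventually_sequentially
  proof (intro exI[of _ 1] allI impI)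
    fix n :: nat assume n: "1 \<le> n"
    have "root n (fact n) \<le> root n (exp 1 * real n ^ (n + 1) / exp (real n))"
      using fact_le_exp_power[OF n] n by (intro real_root_le_mono) auto
    also have "exp 1 * real n ^ (n + 1) / exp (real n) = exp 1 * real n * (real n * exp (-1)) ^ n"
      by (simp add: power_mult_distrib exp_of_nat_mult[symmetric] exp_minus field_simps)
    also have "root n \<dots> = root n (exp 1) * root n (real n) * (real n * exp (-1))"
      using n by (simp add: real_root_mult real_root_power_cancel)
    finally show "root n (fact n) / real n \<le> root n (exp 1) * root n (real n) * exp (-1)"
      using n by (simp add: divide_le_eq field_simps)
  qed
  have "(\<lambda>n. root n (exp 1) * root n (real n) * exp (-1)) \<longlonglongrightarrow> 1 * 1 * exp (-1)"
    by (intro tendsto_mult LIMSEQ_root_const LIMSEQ_root tendsto_const) simp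
  then show "(\<lambda>n. root n (exp 1) * root n (real n) * exp (-1)) \<longlonglongrightarrow> exp (-1)" by simp
qed simp

lemma real_mult_ln_one_minus_tendsto: "(\<lambda>n. real n * ln (1 - \<alpha> / real n)) \<longlonglongrightarrow> - \<alpha>"
proof -
  have "(\<lambda>n. ln ((1 + (- \<alpha>) / real n) ^ n)) \<longlonglongrightarrow> ln (exp (- \<alpha>))"
    by (intro tendsto_ln tendsto_exp_limit_sequentially) simp
  then have lim: "(\<lambda>n. ln ((1 + (- \<alpha>) / real n) ^ n)) \<longlonglongrightarrow> - \<alpha>" by simp
  obtain N :: nat where N: "\<bar>\<alpha>\<bar> < real N" using reals_Archimedean2 by blast
  have "ln ((1 + (- \<alpha>) / real n) ^ n) = real n * ln (1 - \<alpha> / real n)" if "N \<le> n" for n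
  proof -
    have "\<bar>\<alpha>\<bar> < real n" using N that by linarith
    then have "0 < 1 - \<alpha> / real n" by (simp add: field_simps abs_if split: if_splits)
    then show ?thesis by (simp add: ln_realpow)
  qed
  then show ?thesis
    by (intro Lim_transform_eventually[OF lim]) (auto simp: eventually_sequentially)
qed

section \<open>Exponential growth of the forest polynomial\<close>

definition scaled_forest_poly :: "real \<Rightarrow> real \<Rightarrow> nat \<Rightarrow> real" where
  "scaled_forest_poly \<alpha> r n = forest_poly {1..n} r (real n / \<alpha>) / fact n"

lemma scaled_forest_poly_pos:
  "0 < \<alpha> \<Longrightarrow> 1 \<le> r \<Longrightarrow> 1 \<le> n \<Longrightarrow> 0 < scaled_forest_poly \<alpha> r n"
  unfolding scaled_forest_poly_def by (intro divide_pos_pos forest_poly_pos) auto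

lemma scaled_forest_poly_supermultiplicative:
  assumes "0 < \<alpha>"
  shows "scaled_forest_poly \<alpha> r n1 * scaled_forest_poly \<alpha> r n2 \<le> scaled_forest_poly \<alpha> r (n1 + n2)"
proof -
  have m: "real (n1 + n2) / \<alpha> = real n1 / \<alpha> + real n2 / \<alpha>" by (simp add: add_divide_distrib)
  have "real ((n1 + n2) choose n1) * forest_poly {1..n1} r (real n1 / \<alpha>) * forest_poly {1..n2} r (real n2 / \<alpha>)
        \<le> forest_poly {1..n1 + n2} r (real (n1 + n2) / \<alpha>)"
    unfolding m by (rule forest_poly_superadditive) (use assms in auto)
  moreover have "real ((n1 + n2) choose n1) = fact (n1 + n2) / (fact n1 * fact n2)"
    using binomial_fact[of n1 "n1 + n2"] by simp
  ultimately show ?thesis unfolding scaled_forest_poly_def by (simp add: field_simps)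
qed

lemma card_pairs_on_atLeastAtMost_le: "real (card (pairs_on {1..n})) \<le> real n * real n"
proof -
  have "card (pairs_on {1..n}) = n * (n - 1) div 2"
    unfolding card_pairs_on_atLeastAtMost by (simp add: choose_two)
  also have "\<dots> \<le> n * n" by (meson div_le_dividend diff_le_self mult_le_mono2 order_trans)
  finally show ?thesis by (simp add: of_nat_mult[symmetric] del: of_nat_mult)
qed

lemma scaled_forest_poly_le:
  assumes a: "0 < \<alpha>" and n: "1 \<le> n"
  shows "scaled_forest_poly \<alpha> r n \<le> (exp (1 + \<alpha>) / \<alpha>) ^ n"
proof -
  define m where "m = real n / \<alpha>"
  have m: "0 < m" unfolding m_def using a n by simp
  have "forest_poly {1..n} r m \<le> m ^ n * (1 + 1 / m) ^ card (pairs_on {1..n})"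
    using forest_poly_le[of "{1..n}" m r] m by simp
  also have "\<dots> \<le> m ^ n * exp (1 / m) ^ card (pairs_on {1..n})"
    using m by (intro mult_left_mono power_mono) (auto simp: add.commute)
  also have "\<dots> = m ^ n * exp (real (card (pairs_on {1..n})) / m)"
    by (simp add: exp_of_nat_mult[symmetric])
  also have "\<dots> \<le> m ^ n * exp (\<alpha> * real n)"
  proof -
    have "real (card (pairs_on {1..n})) / m \<le> real n * real n / m"
      using card_pairs_on_atLeastAtMost_le m by (intro divide_right_mono) auto
    also have "\<dots> = \<alpha> * real n" using a n unfolding m_def by (simp add: field_simps)
    finally show ?thesis using m by (intro mult_left_mono) auto
  qed
  finally have "scaled_forest_poly \<alpha> r n \<le> m ^ n * exp (\<alpha> * real n) / fact n"
    unfolding scaled_forest_poly_def m_def[symmetric] by (rule divide_right_mono) simp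
  also have "\<dots> = (real n ^ n / fact n) * (exp (\<alpha> * real n) / \<alpha> ^ n)"
    unfolding m_def by (simp add: power_divide)
  also have "\<dots> \<le> exp (real n) * (exp (\<alpha> * real n) / \<alpha> ^ n)"
    using power_div_fact_le_exp[of "real n" n] a by (intro mult_right_mono) auto
  also have "\<dots> = (exp (1 + \<alpha>) / \<alpha>) ^ n"
    by (simp add: power_divide exp_of_nat_mult[symmetric] exp_add[symmetric] algebra_simps)
  finally show ?thesis .
qed

definition forest_rate :: "real \<Rightarrow> real \<Rightarrow> real" where
  "forest_rate \<alpha> r = lim (\<lambda>n. root n (scaled_forest_poly \<alpha> r n))"

lemma forest_rate:
  assumes "0 < \<alpha>" "1 \<le> r"
  shows "(\<lambda>n. root n (scaled_forest_poly \<alpha> r n)) \<longlonglongrightarrow> forest_rate \<alpha> r"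
    and "1 \<le> n \<Longrightarrow> root n (scaled_forest_poly \<alpha> r n) \<le> forest_rate \<alpha> r"
proof -
  obtain l where l: "(\<lambda>n. root n (scaled_forest_poly \<alpha> r n)) \<longlonglongrightarrow> l"
    and le: "\<forall>n\<ge>1. root n (scaled_forest_poly \<alpha> r n) \<le> l"
    using supermultiplicative_root_convergent[OF scaled_forest_poly_pos[OF assms]
        scaled_forest_poly_supermultiplicative[OF assms(1)] scaled_forest_poly_le[OF assms(1)]]
    by blast
  have "forest_rate \<alpha> r = l" unfolding forest_rate_def using l by (rule limI)
  then show "(\<lambda>n. root n (scaled_forest_poly \<alpha> r n)) \<longlonglongrightarrow> forest_rate \<alpha> r"
    and "1 \<le> n \<Longrightarrow> root n (scaled_forest_poly \<alpha> r n) \<le> forest_rate \<alpha> r"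
    using l le by auto
qed

lemma forest_rate_le:
  assumes "0 < \<alpha>" "1 \<le> r"
  shows "forest_rate \<alpha> r \<le> exp (1 + \<alpha>) / \<alpha>"
proof (rule LIMSEQ_le_const2[OF forest_rate(1)[OF assms]])
  have "root n (scaled_forest_poly \<alpha> r n) \<le> exp (1 + \<alpha>) / \<alpha>" if n: "1 \<le> n" for n
  proof -
    have "root n (scaled_forest_poly \<alpha> r n) \<le> root n ((exp (1 + \<alpha>) / \<alpha>) ^ n)"
      using scaled_forest_poly_le[OF assms(1) n] n by (intro real_root_le_mono) auto
    also have "\<dots> = exp (1 + \<alpha>) / \<alpha>" using n assms by (intro real_root_power_cancel) auto
    finally show ?thesis .
  qed
  then show "\<exists>N. \<forall>n\<ge>N. root n (scaled_forest_poly \<alpha> r n) \<le> exp (1 + \<alpha>) / \<alpha>" by blast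
qed

lemma forest_rate_mono:
  assumes "0 < \<alpha>" "1 \<le> r" "r \<le> r'"
  shows "forest_rate \<alpha> r \<le> forest_rate \<alpha> r'"
proof (rule LIMSEQ_le[OF forest_rate(1)[OF assms(1,2)] forest_rate(1)[OF assms(1)]])
  show "1 \<le> r'" using assms by linarith
  have "root n (scaled_forest_poly \<alpha> r n) \<le> root n (scaled_forest_poly \<alpha> r' n)" if "1 \<le> n" for n
    unfolding scaled_forest_poly_def using that assms forest_poly_mono_r[of "{1..n}" "real n / \<alpha>" r r']
    by (intro real_root_le_mono divide_right_mono) auto
  then show "\<exists>N. \<forall>n\<ge>N. root n (scaled_forest_poly \<alpha> r n) \<le> root n (scaled_forest_poly \<alpha> r' n)"
    by blast
qed

definition forest_rate_limit :: "real \<Rightarrow> real" where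
  "forest_rate_limit \<alpha> = (SUP r\<in>{1..}. forest_rate \<alpha> r)"

lemma forest_rate_le_limit:
  assumes "0 < \<alpha>" "1 \<le> r"
  shows "forest_rate \<alpha> r \<le> forest_rate_limit \<alpha>"
  unfolding forest_rate_limit_def using assms forest_rate_le[OF assms(1)]
  by (intro cSUP_upper bdd_aboveI[of _ "exp (1 + \<alpha>) / \<alpha>"]) auto

lemma forest_rate_limit_tendsto:
  assumes a: "0 < \<alpha>"
  shows "(forest_rate \<alpha> \<longlongrightarrow> forest_rate_limit \<alpha>) at_top"
proof (rule order_tendstoI)
  fix y assume "forest_rate_limit \<alpha> < y"
  then show "\<forall>\<^sub>F r in at_top. forest_rate \<alpha> r < y"
    using forest_rate_le_limit[OF a] unfolding eventually_at_top_linorder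
    by (intro exI[of _ 1]) (meson le_less_trans)
next
  fix y assume "y < forest_rate_limit \<alpha>"
  then obtain r0 where r0: "1 \<le> r0" "y < forest_rate \<alpha> r0"
    unfolding forest_rate_limit_def using forest_rate_le[OF a]
    by (subst (asm) less_cSUP_iff) (auto intro: bdd_aboveI[of _ "exp (1 + \<alpha>) / \<alpha>"])
  then show "\<forall>\<^sub>F r in at_top. y < forest_rate \<alpha> r"
    unfolding eventually_at_top_linorder using forest_rate_mono[OF a r0(1)]
    by (intro exI[of _ r0]) (meson less_le_trans)
qed

section \<open>The random graph\<close>

definition edge_weight :: "nat \<Rightarrow> real \<Rightarrow> (nat set set \<Rightarrow> bool) \<Rightarrow> real" where
  "edge_weight n x Q = (\<Sum>E\<in>{E. E \<subseteq> all_pairs n \<and> Q E}. x ^ card E)"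

lemma finite_all_pairs: "finite (all_pairs n)"
  unfolding all_pairs_eq_pairs_on by (simp add: finite_pairs_on)

lemma finite_graphs: "finite {E. E \<subseteq> all_pairs n \<and> Q E}"
  by (rule finite_subset[of _ "Pow (all_pairs n)"]) (auto simp: finite_all_pairs)

lemma edge_weight_mono:
  assumes "0 \<le> x" "\<And>E. E \<subseteq> all_pairs n \<Longrightarrow> Q E \<Longrightarrow> Q' E"
  shows "edge_weight n x Q \<le> edge_weight n x Q'"
  unfolding edge_weight_def
  by (rule sum_mono2) (use assms finite_all_pairs in \<open>auto intro: finite_subset\<close>)

lemma edge_weight_nonneg: "0 \<le> x \<Longrightarrow> 0 \<le> edge_weight n x Q"
  unfolding edge_weight_def by (intro sum_nonneg) auto

lemma Gnp_prob_eq_edge_weight: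
  assumes "p < 1"
  shows "Gnp_prob n p Q = (1 - p) ^ card (all_pairs n) * edge_weight n (p / (1 - p)) Q"
  unfolding Gnp_prob_def edge_weight_def sum_distrib_left
proof (rule sum.cong[OF refl])
  fix E assume "E \<in> {E. E \<subseteq> all_pairs n \<and> Q E}"
  then have "card E \<le> card (all_pairs n)" using finite_all_pairs by (auto intro: card_mono)
  then show "p ^ card E * (1 - p) ^ (card (all_pairs n) - card E) =
        (1 - p) ^ card (all_pairs n) * (p / (1 - p)) ^ card E"
    using assms by (simp add: power_diff power_divide)
qed

lemma P_na_eq_edge_weight:
  assumes "0 \<le> \<alpha>" "\<alpha> < real n"
  shows "P_na n \<alpha> Q = (1 - \<alpha> / real n) ^ card (all_pairs n) * edge_weight n (\<alpha> / (real n - \<alpha>)) Q"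
proof -
  have p: "\<alpha> / real n < 1" and x: "\<alpha> / real n / (1 - \<alpha> / real n) = \<alpha> / (real n - \<alpha>)"
    using assms by (simp_all add: field_simps)
  show ?thesis unfolding P_na_def Gnp_prob_eq_edge_weight[OF p] x ..
qed

lemma P_na_mono:
  assumes "0 \<le> \<alpha>" "\<alpha> < real n" "\<And>E. E \<subseteq> all_pairs n \<Longrightarrow> Q E \<Longrightarrow> Q' E"
  shows "P_na n \<alpha> Q \<le> P_na n \<alpha> Q'"
  unfolding P_na_eq_edge_weight[OF assms(1,2)] using assms
  by (intro mult_left_mono edge_weight_mono) auto

lemma P_na_nonneg:
  assumes "0 \<le> \<alpha>" "\<alpha> < real n"
  shows "0 \<le> P_na n \<alpha> Q"
  unfolding P_na_eq_edge_weight[OF assms] using assms by (intro mult_nonneg_nonneg edge_weight_nonneg) auto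

lemma P_na_zero: "P_na n 0 Q = (if Q {} then 1 else 0)"
proof -
  define S where "S = {E. E \<subseteq> all_pairs n \<and> Q E}"
  have "P_na n 0 Q = (\<Sum>E\<in>S. if E = {} then 1 else 0)"
    unfolding P_na_def Gnp_prob_def S_def[symmetric]
  proof (rule sum.cong[OF refl])
    fix E assume "E \<in> S"
    then have "finite E" unfolding S_def using finite_all_pairs finite_subset by blast
    then show "(0 / real n) ^ card E * (1 - 0 / real n) ^ (card (all_pairs n) - card E)
        = (if E = {} then 1 else 0)" by (simp add: card_gt_0_iff)
  qed
  also have "\<dots> = (if {} \<in> S then 1 else 0)"
    using finite_all_pairs by (simp add: sum.delta S_def)
  finally show ?thesis unfolding S_def by simp
qed

lemma component_eq_reachable_from:
  assumes "E \<subseteq> all_pairs n" "v \<in> {1..n}"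
  shows "component n E v = reachable_from E v"
  using reachable_from_subset[of E "{1..n}" v] assms
  unfolding component_def reachable_from_def all_pairs_eq_pairs_on by blast

lemma event_B_iff_components_le:
  "E \<subseteq> all_pairs n \<Longrightarrow> event_B n r E \<longleftrightarrow> components_le {1..n} r E"
  unfolding event_B_def components_le_def using component_eq_reachable_from by simp

lemma event_B_mono: "r \<le> r' \<Longrightarrow> event_B n r E \<Longrightarrow> event_B n r' E"
  unfolding event_B_def by force

lemma event_B_empty: "1 \<le> n \<Longrightarrow> event_B n r {} \<longleftrightarrow> 1 \<le> r"
  using component_eq_reachable_from[of "{}" n] by (auto simp: event_B_def reachable_from_empty)

lemma bounded_forests_event_L: "bounded_forests {1..n} (real n) = {E. E \<subseteq> all_pairs n \<and> event_L E}"
  using bounded_forests_eq_forests[of "{1..n}" "real n"]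
  unfolding event_L_def all_pairs_eq_pairs_on by simp

definition connected_pairs :: "nat \<Rightarrow> nat set set \<Rightarrow> nat set set" where
  "connected_pairs n F = {e \<in> all_pairs n. \<exists>a b. e = {a, b} \<and> (adj F)\<^sup>*\<^sup>* a b}"

lemma finite_connected_pairs: "finite (connected_pairs n F)"
  unfolding connected_pairs_def using finite_all_pairs by simp

lemma card_connected_pairs_le:
  assumes "E \<subseteq> all_pairs n" "event_B n r E" "F \<subseteq> E"
  shows "real (card (connected_pairs n F)) \<le> real n * r"
proof -
  define S where "S = (SIGMA a:{1..n}. component n E a)"
  have "connected_pairs n F \<subseteq> (\<lambda>(a, b). {a, b}) ` S"
  proof
    fix e assume "e \<in> connected_pairs n F"
    then obtain a b where e: "e \<in> all_pairs n" "e = {a, b}" "(adj F)\<^sup>*\<^sup>* a b"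
      unfolding connected_pairs_def by blast
    then have "a \<in> {1..n}" "b \<in> {1..n}" unfolding all_pairs_def by auto
    then have "(a, b) \<in> S"
      unfolding S_def component_def using adj_rtranclp_mono[OF assms(3) e(3)] by auto
    then show "e \<in> (\<lambda>(a, b). {a, b}) ` S" using e by force
  qed
  then have "card (connected_pairs n F) \<le> card ((\<lambda>(a, b). {a, b}) ` S)"
    by (rule card_mono[rotated]) (simp add: S_def component_def)
  also have "\<dots> \<le> card S" by (rule card_image_le) (simp add: S_def component_def)
  also have "\<dots> = (\<Sum>a\<in>{1..n}. card (component n E a))"
    unfolding S_def by (rule card_SigmaI) (auto simp: component_def)
  finally have "real (card (connected_pairs n F)) \<le> (\<Sum>a\<in>{1..n}. real (card (component n E a)))"
    by (simp add: of_nat_sum[symmetric] del: of_nat_sum)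
  also have "\<dots> \<le> real (card {1..n}) * r"
    using assms(2) unfolding event_B_def by (intro sum_bounded_above) blast
  finally show ?thesis by simp
qed

definition forests_connected_pairs_le :: "nat \<Rightarrow> real \<Rightarrow> nat set set set" where
  "forests_connected_pairs_le n r =
    {F. F \<subseteq> all_pairs n \<and> \<not> has_cycle F \<and> real (card (connected_pairs n F)) \<le> real n * r}"

lemma event_B_spanning_forest:
  assumes EA: "E \<subseteq> all_pairs n" and B: "event_B n r E"
  shows "\<exists>F \<subseteq> E. F \<in> forests_connected_pairs_le n r \<and> E - F \<subseteq> connected_pairs n F"
proof -
  have "finite E" using EA finite_all_pairs finite_subset by blast
  then obtain F where F: "F \<subseteq> E" "\<not> has_cycle F" and span: "\<forall>u v. {u, v} \<in> E \<longrightarrow> (adj F)\<^sup>*\<^sup>* u v"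
    using spanning_forest_exists by blast
  have "E - F \<subseteq> connected_pairs n F"
  proof
    fix e assume e: "e \<in> E - F"
    then have "e \<in> all_pairs n" using EA by blast
    then obtain a b where "e = {a, b}" unfolding all_pairs_eq_pairs_on by (blast elim: pairs_onE)
    then show "e \<in> connected_pairs n F"
      using span e \<open>e \<in> all_pairs n\<close> unfolding connected_pairs_def by blast
  qed
  moreover have "F \<subseteq> all_pairs n" using F(1) EA by (rule order_trans)
  then have "F \<in> forests_connected_pairs_le n r"
    unfolding forests_connected_pairs_le_def using F(2) card_connected_pairs_le[OF EA B F(1)] by simp
  ultimately show ?thesis using F(1) by blast
qed

text \<open>Splitting a graph into a spanning forest \<open>F\<close> and the remaining edges, which all lie in
  \<open>connected_pairs n F\<close>, is injective.\<close>

lemma edge_weight_event_B_le_sum: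
  assumes x: "0 < x"
  shows "edge_weight n x (event_B n r)
    \<le> (\<Sum>F\<in>forests_connected_pairs_le n r. x ^ card F * (1 + x) ^ card (connected_pairs n F))"
proof -
  define D where "D = {E. E \<subseteq> all_pairs n \<and> event_B n r E}"
  define T where "T = (SIGMA F:forests_connected_pairs_le n r. Pow (connected_pairs n F))"
  have "\<forall>E\<in>D. \<exists>F \<subseteq> E. F \<in> forests_connected_pairs_le n r \<and> E - F \<subseteq> connected_pairs n F"
    unfolding D_def using event_B_spanning_forest by blast
  from bchoice[OF this] obtain sf where sf: "\<forall>E\<in>D. sf E \<subseteq> E \<and>
      sf E \<in> forests_connected_pairs_le n r \<and> E - sf E \<subseteq> connected_pairs n (sf E)" ..
  define g where "g E = (sf E, E - sf E)" for E
  have inj: "inj_on g D"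
  proof (rule inj_onI)
    fix E1 E2 assume "E1 \<in> D" "E2 \<in> D" "g E1 = g E2"
    then have "sf E1 = sf E2" "E1 - sf E1 = E2 - sf E2" "sf E1 \<subseteq> E1" "sf E2 \<subseteq> E2"
      using sf unfolding g_def by auto
    then show "E1 = E2" by blast
  qed
  have gT: "g ` D \<subseteq> T" unfolding T_def g_def using sf by auto
  have finT: "finite (forests_connected_pairs_le n r)" unfolding forests_connected_pairs_le_def
    using finite_all_pairs by (auto intro: finite_subset[of _ "Pow (all_pairs n)"])
  have "edge_weight n x (event_B n r) = (\<Sum>y\<in>g ` D. x ^ (card (fst y) + card (snd y)))"
    unfolding edge_weight_def D_def[symmetric]
  proof (rule sum.reindex_cong[OF inj refl, symmetric])
    fix E assume "E \<in> D"
    then have "sf E \<subseteq> E" "finite E"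
      using sf finite_subset[OF _ finite_all_pairs] unfolding D_def by auto
    then show "x ^ (card (fst (g E)) + card (snd (g E))) = x ^ card E"
      unfolding g_def by (simp add: card_Diff_subset card_mono finite_subset)
  qed
  also have "\<dots> \<le> (\<Sum>y\<in>T. x ^ (card (fst y) + card (snd y)))"
    by (rule sum_mono2[OF _ gT]) (use finT finite_connected_pairs x in \<open>auto simp: T_def\<close>)
  also have "\<dots> = (\<Sum>F\<in>forests_connected_pairs_le n r. \<Sum>S\<in>Pow (connected_pairs n F). x ^ (card F + card S))"
    unfolding T_def by (subst sum.Sigma) (use finT finite_connected_pairs in \<open>auto simp: case_prod_beta\<close>)
  also have "\<dots> = (\<Sum>F\<in>forests_connected_pairs_le n r. x ^ card F * (1 + x) ^ card (connected_pairs n F))"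
    by (simp add: power_add sum_distrib_left[symmetric] sum_power_card_Pow[OF finite_connected_pairs])
  finally show ?thesis .
qed

lemma edge_weight_event_B_le:
  assumes x: "0 < x" and r: "0 \<le> r"
  shows "edge_weight n x (event_B n r) \<le> exp (x * (real n * r)) * edge_weight n x event_L"
proof -
  define Ls where "Ls = forests_connected_pairs_le n r"
  have "edge_weight n x (event_B n r) \<le> (\<Sum>F\<in>Ls. x ^ card F * (1 + x) ^ card (connected_pairs n F))"
    unfolding Ls_def using edge_weight_event_B_le_sum[OF x] .
  also have "\<dots> \<le> (\<Sum>F\<in>Ls. x ^ card F * exp (x * (real n * r)))"
  proof (rule sum_mono)
    fix F assume "F \<in> Ls"
    then have cw: "real (card (connected_pairs n F)) \<le> real n * r"
      unfolding Ls_def forests_connected_pairs_le_def by simp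
    have "(1 + x) ^ card (connected_pairs n F) \<le> exp x ^ card (connected_pairs n F)"
      using x by (intro power_mono) (auto simp: add.commute)
    also have "\<dots> = exp (real (card (connected_pairs n F)) * x)" by (simp add: exp_of_nat_mult)
    also have "\<dots> \<le> exp (x * (real n * r))" using cw x by (simp add: mult.commute mult_left_mono)
    finally show "x ^ card F * (1 + x) ^ card (connected_pairs n F) \<le> x ^ card F * exp (x * (real n * r))"
      using x by (intro mult_left_mono) auto
  qed
  also have "\<dots> = exp (x * (real n * r)) * (\<Sum>F\<in>Ls. x ^ card F)"
    by (simp add: sum_distrib_right mult.commute)
  also have "\<dots> \<le> exp (x * (real n * r)) * edge_weight n x event_L"
    unfolding edge_weight_def Ls_def forests_connected_pairs_le_def event_L_def using finite_all_pairs x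
    by (intro mult_left_mono sum_mono2) (auto intro: finite_subset[of _ "Pow (all_pairs n)"])
  finally show ?thesis .
qed

definition forest_factor :: "real \<Rightarrow> nat \<Rightarrow> real" where
  "forest_factor \<alpha> n = (1 - \<alpha> / real n) ^ card (all_pairs n) * (\<alpha> / (real n - \<alpha>)) ^ n * fact n"

lemma forest_factor_nonneg: "0 \<le> \<alpha> \<Longrightarrow> \<alpha> < real n \<Longrightarrow> 0 \<le> forest_factor \<alpha> n"
  unfolding forest_factor_def by (simp add: field_simps)

lemma P_na_ge_scaled_forest_poly:
  assumes a: "0 < \<alpha>" and n: "\<alpha> < real n" and Q: "\<And>E. E \<in> bounded_forests {1..n} r \<Longrightarrow> Q E"
  shows "forest_factor \<alpha> n * (1 - \<alpha> / real n) ^ n * scaled_forest_poly \<alpha> r n \<le> P_na n \<alpha> Q"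
proof -
  define x where "x = \<alpha> / (real n - \<alpha>)"
  have x: "0 < x" and inv: "1 / x = real n / \<alpha> - 1" using a n by (auto simp: x_def field_simps)
  have m: "0 \<le> real n / \<alpha> - 1" "real n / \<alpha> - 1 \<le> real n / \<alpha>" "0 < real n / \<alpha>"
    using a n by (auto simp: field_simps)
  have q: "(real n / \<alpha> - 1) / (real n / \<alpha>) = 1 - \<alpha> / real n" using a n by (simp add: field_simps)
  have "x ^ n * fact n * ((1 - \<alpha> / real n) ^ n * scaled_forest_poly \<alpha> r n)
      = x ^ n * ((1 - \<alpha> / real n) ^ n * forest_poly {1..n} r (real n / \<alpha>))"
    unfolding scaled_forest_poly_def by simp
  also have "\<dots> \<le> x ^ n * forest_poly {1..n} r (1 / x)"
    using forest_poly_scale[OF m, of "{1..n}" r] x unfolding q inv by (intro mult_left_mono) auto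
  also have "\<dots> = (\<Sum>F\<in>bounded_forests {1..n} r. x ^ card F)"
    using weight_sum_bounded_forests[of "{1..n}" x r] x by simp
  also have "\<dots> \<le> edge_weight n x Q"
  proof -
    have "bounded_forests {1..n} r \<subseteq> {E. E \<subseteq> all_pairs n \<and> Q E}"
      using Q unfolding bounded_forests_def all_pairs_eq_pairs_on by blast
    then show ?thesis unfolding edge_weight_def using x by (intro sum_mono2 finite_graphs) auto
  qed
  finally have "x ^ n * fact n * ((1 - \<alpha> / real n) ^ n * scaled_forest_poly \<alpha> r n) \<le> edge_weight n x Q" .
  moreover have "0 \<le> (1 - \<alpha> / real n) ^ card (all_pairs n)"
    by (intro zero_le_power) (use a n in \<open>simp add: field_simps\<close>)
  ultimately have "(1 - \<alpha> / real n) ^ card (all_pairs n) *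
      (x ^ n * fact n * ((1 - \<alpha> / real n) ^ n * scaled_forest_poly \<alpha> r n))
      \<le> (1 - \<alpha> / real n) ^ card (all_pairs n) * edge_weight n x Q"
    by (rule mult_left_mono)
  then show ?thesis
    unfolding P_na_eq_edge_weight[OF less_imp_le[OF a] n] forest_factor_def x_def[symmetric]
    by (simp add: ac_simps)
qed

lemma P_na_event_L_le:
  assumes a: "0 < \<alpha>" and n: "\<alpha> < real n"
  shows "P_na n \<alpha> event_L \<le> forest_factor \<alpha> n * scaled_forest_poly \<alpha> (real n) n"
proof -
  define x where "x = \<alpha> / (real n - \<alpha>)"
  have x: "0 < x" and inv: "1 / x = real n / \<alpha> - 1" using a n by (auto simp: x_def field_simps)
  have "edge_weight n x event_L = (\<Sum>F\<in>bounded_forests {1..n} (real n). x ^ card F)"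
    unfolding edge_weight_def bounded_forests_event_L ..
  also have "\<dots> = x ^ n * forest_poly {1..n} (real n) (real n / \<alpha> - 1)"
    using weight_sum_bounded_forests[of "{1..n}" x "real n"] x inv by simp
  also have "\<dots> \<le> x ^ n * forest_poly {1..n} (real n) (real n / \<alpha>)"
    using a n x by (intro mult_left_mono forest_poly_mono) (auto simp: field_simps)
  finally have "edge_weight n x event_L \<le> x ^ n * fact n * scaled_forest_poly \<alpha> (real n) n"
    unfolding scaled_forest_poly_def by simp
  moreover have "0 \<le> (1 - \<alpha> / real n) ^ card (all_pairs n)"
    by (intro zero_le_power) (use a n in \<open>simp add: field_simps\<close>)
  ultimately have "(1 - \<alpha> / real n) ^ card (all_pairs n) * edge_weight n x event_L
      \<le> (1 - \<alpha> / real n) ^ card (all_pairs n) * (x ^ n * fact n * scaled_forest_poly \<alpha> (real n) n)"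
    by (rule mult_left_mono)
  then show ?thesis
    unfolding P_na_eq_edge_weight[OF less_imp_le[OF a] n] forest_factor_def x_def[symmetric]
    by (simp add: ac_simps)
qed

lemma root_P_na_event_B_linear_le:
  assumes a: "0 < \<alpha>" and n: "2 * \<alpha> + 1 \<le> real n" and e: "0 \<le> \<epsilon>"
  shows "root n (P_na n \<alpha> (event_B n (\<epsilon> * real n))) \<le> exp (2 * \<alpha> * \<epsilon>) * root n (P_na n \<alpha> event_L)"
proof -
  have na: "\<alpha> < real n" using n a by linarith
  have n1: "1 \<le> n" using n a by (cases n) auto
  define x where "x = \<alpha> / (real n - \<alpha>)"
  have x: "0 < x" using a na by (simp add: x_def)
  have "(1 - \<alpha> / real n) ^ card (all_pairs n) * edge_weight n x (event_B n (\<epsilon> * real n))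
      \<le> (1 - \<alpha> / real n) ^ card (all_pairs n) *
        (exp (x * (real n * (\<epsilon> * real n))) * edge_weight n x event_L)"
    using edge_weight_event_B_le[OF x, of "\<epsilon> * real n" n] e a na
    by (intro mult_left_mono zero_le_power) (auto simp: field_simps)
  then have "P_na n \<alpha> (event_B n (\<epsilon> * real n)) \<le> exp (x * (real n * (\<epsilon> * real n))) * P_na n \<alpha> event_L"
    unfolding P_na_eq_edge_weight[OF less_imp_le[OF a] na] x_def[symmetric] by (simp add: ac_simps)
  then have "root n (P_na n \<alpha> (event_B n (\<epsilon> * real n)))
      \<le> root n (exp (x * (real n * (\<epsilon> * real n)))) * root n (P_na n \<alpha> event_L)"
    using n1 by (auto simp: real_root_mult[symmetric] intro: real_root_le_mono)
  moreover have "root n (exp (x * (real n * (\<epsilon> * real n)))) \<le> exp (2 * \<alpha> * \<epsilon>)"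
  proof -
    have "root n (exp (x * (real n * (\<epsilon> * real n)))) = exp (x * real n * \<epsilon>)"
      using root_eq_exp_ln[OF n1 exp_gt_zero] n1 by (simp add: ac_simps)
    moreover have "x * real n \<le> 2 * \<alpha>" using a n na unfolding x_def by (simp add: field_simps)
    ultimately show ?thesis using e by (simp add: mult_right_mono)
  qed
  moreover have "0 \<le> root n (P_na n \<alpha> event_L)"
    using P_na_nonneg[OF less_imp_le[OF a] na] by (rule real_root_ge_zero)
  ultimately show ?thesis by (meson mult_right_mono order_trans)
qed

lemma card_all_pairs: "2 * real (card (all_pairs n)) = real n * (real n - 1)"
proof -
  have "card (all_pairs n) = n * (n - 1) div 2"
    unfolding all_pairs_eq_pairs_on card_pairs_on_atLeastAtMost by (simp add: choose_two)
  moreover have "even (n * (n - 1))" by (cases "even n") auto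
  ultimately have "2 * card (all_pairs n) = n * (n - 1)" by simp
  then have "real (2 * card (all_pairs n)) = real (n * (n - 1))" by simp
  then show ?thesis by (cases n) (auto simp: algebra_simps)
qed

text \<open>The three factors of \<open>forest_factor\<close>, rewritten so that each has an elementary limit.\<close>

lemma root_forest_factor_eq:
  assumes a: "0 < \<alpha>" and n: "\<alpha> < real n"
  shows "root n (forest_factor \<alpha> n) = exp ((real n - 1) / real n / 2 * (real n * ln (1 - \<alpha> / real n))) *
      (\<alpha> / (1 - \<alpha> / real n)) * (root n (fact n) / real n)"
proof -
  have n1: "1 \<le> n" using n a by (cases n) auto
  define q where "q = 1 - \<alpha> / real n"
  have q0: "0 < q" unfolding q_def using n a by (simp add: field_simps)
  have "root n (q ^ card (all_pairs n)) = exp (ln (q ^ card (all_pairs n)) / real n)"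
    using root_eq_exp_ln[OF n1] q0 by simp
  also have "ln (q ^ card (all_pairs n)) = real n * (real n - 1) / 2 * ln q"
    using q0 card_all_pairs[of n] by (simp add: ln_realpow)
  also have "real n * (real n - 1) / 2 * ln q / real n = (real n - 1) / real n / 2 * (real n * ln q)"
    using n1 by (simp add: field_simps)
  finally have r1: "root n (q ^ card (all_pairs n)) = exp ((real n - 1) / real n / 2 * (real n * ln q))" .
  have r2: "root n ((\<alpha> / (real n - \<alpha>)) ^ n) = \<alpha> / (real n - \<alpha>)"
    using n1 a n by (intro real_root_power_cancel) auto
  have r3: "\<alpha> / (real n - \<alpha>) * root n (fact n) = \<alpha> / q * (root n (fact n) / real n)"
    unfolding q_def using n n1 by (simp add: field_simps)
  have qn: "q * real n = real n - \<alpha>" unfolding q_def using n1 by (simp add: field_simps)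
  show ?thesis
    unfolding forest_factor_def q_def[symmetric] real_root_mult r1 r2
    using r3 qn by (simp add: mult.assoc)
qed

lemma root_forest_factor_tendsto:
  assumes a: "0 < \<alpha>"
  shows "(\<lambda>n. root n (forest_factor \<alpha> n)) \<longlonglongrightarrow> exp (- \<alpha> / 2) * \<alpha> * exp (-1)"
proof -
  have inv: "(\<lambda>n. c / real n) \<longlonglongrightarrow> 0" for c :: real
    by (intro tendsto_divide_0[OF tendsto_const] filterlim_at_top_imp_at_infinity[OF filterlim_real_sequentially])
  have "(\<lambda>n. 1 - 1 / real n) \<longlonglongrightarrow> 1" using tendsto_diff[OF tendsto_const inv] by simp
  then have lim1: "(\<lambda>n. (real n - 1) / real n) \<longlonglongrightarrow> 1"
    by (rule Lim_transform_eventually) (auto simp: eventually_sequentially field_simps intro!: exI[of _ 1])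
  have lim2: "(\<lambda>n. 1 - \<alpha> / real n) \<longlonglongrightarrow> 1" using tendsto_diff[OF tendsto_const inv] by simp
  have "(\<lambda>n. exp ((real n - 1) / real n / 2 * (real n * ln (1 - \<alpha> / real n))) *
      (\<alpha> / (1 - \<alpha> / real n)) * (root n (fact n) / real n))
    \<longlonglongrightarrow> exp (1 / 2 * (- \<alpha>)) * (\<alpha> / 1) * exp (-1)"
    by (intro tendsto_mult tendsto_exp tendsto_divide lim1 lim2 tendsto_const
        real_mult_ln_one_minus_tendsto root_fact_div_tendsto) auto
  moreover obtain N :: nat where N: "\<alpha> < real N" using reals_Archimedean2 by blast
  have "exp ((real n - 1) / real n / 2 * (real n * ln (1 - \<alpha> / real n))) *
      (\<alpha> / (1 - \<alpha> / real n)) * (root n (fact n) / real n) = root n (forest_factor \<alpha> n)"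
    if "N \<le> n" for n
  proof (rule root_forest_factor_eq[OF a, symmetric])
    have "real N \<le> real n" using that by simp
    then show "\<alpha> < real n" using N by linarith
  qed
  then have "\<forall>\<^sub>F n in sequentially. exp ((real n - 1) / real n / 2 * (real n * ln (1 - \<alpha> / real n))) *
      (\<alpha> / (1 - \<alpha> / real n)) * (root n (fact n) / real n) = root n (forest_factor \<alpha> n)"
    unfolding eventually_sequentially by blast
  ultimately show ?thesis by (auto intro: Lim_transform_eventually)
qed

section \<open>The limits\<close>

definition forest_factor_rate :: "real \<Rightarrow> real" where
  "forest_factor_rate \<alpha> = exp (- \<alpha> / 2) * \<alpha> * exp (-1)"

lemma root_P_na_ge_bounded_forests:
  assumes a: "0 < \<alpha>" and n: "\<alpha> < real n" and Q: "\<And>E. E \<in> bounded_forests {1..n} r \<Longrightarrow> Q E"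
  shows "root n (forest_factor \<alpha> n) * ((1 - \<alpha> / real n) * root n (scaled_forest_poly \<alpha> r n))
    \<le> root n (P_na n \<alpha> Q)"
proof -
  have n1: "1 \<le> n" using a n by (cases n) auto
  have q: "0 \<le> 1 - \<alpha> / real n" using a n by (simp add: field_simps)
  have "root n (forest_factor \<alpha> n) * ((1 - \<alpha> / real n) * root n (scaled_forest_poly \<alpha> r n))
      = root n (forest_factor \<alpha> n * (1 - \<alpha> / real n) ^ n * scaled_forest_poly \<alpha> r n)"
    using n1 q by (simp add: real_root_mult real_root_power_cancel)
  also have "\<dots> \<le> root n (P_na n \<alpha> Q)"
    using P_na_ge_scaled_forest_poly[OF a n Q] n1 by (intro real_root_le_mono) auto
  finally show ?thesis .
qed

lemma liminf_root_P_na_ge: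
  assumes a: "0 < \<alpha>" and r: "1 \<le> r" and Q: "\<And>n E. E \<in> bounded_forests {1..n} r \<Longrightarrow> Q n E"
  shows "ereal (forest_factor_rate \<alpha> * forest_rate \<alpha> r) \<le> liminf (\<lambda>n. ereal (root n (P_na n \<alpha> (Q n))))"
proof -
  define low where "low n = root n (forest_factor \<alpha> n) * ((1 - \<alpha> / real n) * root n (scaled_forest_poly \<alpha> r n))" for n
  have "(\<lambda>n. 1 - \<alpha> / real n) \<longlonglongrightarrow> 1 - 0"
    by (intro tendsto_diff tendsto_const tendsto_divide_0[OF tendsto_const]
        filterlim_at_top_imp_at_infinity[OF filterlim_real_sequentially])
  then have "low \<longlonglongrightarrow> forest_factor_rate \<alpha> * ((1 - 0) * forest_rate \<alpha> r)"
    unfolding low_def forest_factor_rate_def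
    by (intro tendsto_mult root_forest_factor_tendsto[OF a] forest_rate(1)[OF a r])
  then have "ereal (forest_factor_rate \<alpha> * forest_rate \<alpha> r) = liminf (\<lambda>n. ereal (low n))"
    by (intro lim_imp_Liminf[symmetric]) auto
  also have "\<dots> \<le> liminf (\<lambda>n. ereal (root n (P_na n \<alpha> (Q n))))"
  proof (rule Liminf_mono)
    obtain N :: nat where "\<alpha> < real N" using reals_Archimedean2 by blast
    then have "\<forall>n\<ge>N. low n \<le> root n (P_na n \<alpha> (Q n))"
      unfolding low_def using root_P_na_ge_bounded_forests[OF a _ Q] by force
    then show "\<forall>\<^sub>F n in sequentially. ereal (low n) \<le> ereal (root n (P_na n \<alpha> (Q n)))"
      unfolding eventually_sequentially by auto
  qed
  finally show ?thesis .
qed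

lemma root_P_na_event_L_le:
  assumes a: "0 < \<alpha>" and n: "\<alpha> < real n"
  shows "root n (P_na n \<alpha> event_L) \<le> root n (forest_factor \<alpha> n) * forest_rate_limit \<alpha>"
proof -
  have n1: "1 \<le> n" using a n by (cases n) auto
  have "root n (P_na n \<alpha> event_L) \<le> root n (forest_factor \<alpha> n) * root n (scaled_forest_poly \<alpha> (real n) n)"
    using P_na_event_L_le[OF a n] n1 by (auto simp: real_root_mult[symmetric] intro: real_root_le_mono)
  also have "\<dots> \<le> root n (forest_factor \<alpha> n) * forest_rate_limit \<alpha>"
  proof (rule mult_left_mono)
    have rn: "1 \<le> real n" using n1 by simp
    show "root n (scaled_forest_poly \<alpha> (real n) n) \<le> forest_rate_limit \<alpha>"
      using forest_rate(2)[OF a rn n1] forest_rate_le_limit[OF a rn] by (rule order_trans)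
    show "0 \<le> root n (forest_factor \<alpha> n)"
      using forest_factor_nonneg[OF less_imp_le[OF a] n] by (rule real_root_ge_zero)
  qed
  finally show ?thesis .
qed

lemma root_P_na_event_L_tendsto:
  assumes a: "0 < \<alpha>"
  shows "(\<lambda>n. root n (P_na n \<alpha> event_L)) \<longlonglongrightarrow> forest_factor_rate \<alpha> * forest_rate_limit \<alpha>"
proof (rule limsup_le_liminf_real)
  obtain N :: nat where N: "\<alpha> < real N" using reals_Archimedean2 by blast
  have "ereal (root n (P_na n \<alpha> event_L)) \<le> ereal (root n (forest_factor \<alpha> n) * forest_rate_limit \<alpha>)"
    if "N \<le> n" for n
  proof -
    have "real N \<le> real n" using that by simp
    then show ?thesis using root_P_na_event_L_le[OF a] N by simp
  qed
  then have "limsup (\<lambda>n. root n (P_na n \<alpha> event_L))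
      \<le> limsup (\<lambda>n. ereal (root n (forest_factor \<alpha> n) * forest_rate_limit \<alpha>))"
    by (intro Limsup_mono) (auto simp: eventually_sequentially)
  also have "\<dots> = ereal (forest_factor_rate \<alpha> * forest_rate_limit \<alpha>)"
    unfolding forest_factor_rate_def
    by (intro lim_imp_Limsup tendsto_ereal tendsto_mult root_forest_factor_tendsto[OF a] tendsto_const) auto
  finally show "limsup (\<lambda>n. root n (P_na n \<alpha> event_L)) \<le> forest_factor_rate \<alpha> * forest_rate_limit \<alpha>" .
  have "((\<lambda>r. ereal (forest_factor_rate \<alpha> * forest_rate \<alpha> r))
      \<longlongrightarrow> ereal (forest_factor_rate \<alpha> * forest_rate_limit \<alpha>)) at_top"
    by (intro tendsto_ereal tendsto_mult tendsto_const forest_rate_limit_tendsto[OF a])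
  moreover have "\<forall>\<^sub>F r in at_top. ereal (forest_factor_rate \<alpha> * forest_rate \<alpha> r)
      \<le> liminf (\<lambda>n. ereal (root n (P_na n \<alpha> event_L)))"
    unfolding eventually_at_top_linorder
    by (intro exI[of _ 1] allI impI liminf_root_P_na_ge[OF a])
      (auto simp: bounded_forests_def event_L_def)
  ultimately show "ereal (forest_factor_rate \<alpha> * forest_rate_limit \<alpha>)
      \<le> liminf (\<lambda>n. root n (P_na n \<alpha> event_L))"
    by (intro tendsto_le[OF _ tendsto_const]) auto
qed

lemma limsup_root_P_na_event_B_linear_le:
  assumes a: "0 < \<alpha>" and e: "0 \<le> \<epsilon>"
  shows "limsup (\<lambda>n. ereal (root n (P_na n \<alpha> (event_B n (\<epsilon> * real n)))))
    \<le> ereal (exp (2 * \<alpha> * \<epsilon>) * (forest_factor_rate \<alpha> * forest_rate_limit \<alpha>))"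
proof -
  obtain N :: nat where N: "2 * \<alpha> + 1 \<le> real N" by (meson real_arch_simple)
  have "root n (P_na n \<alpha> (event_B n (\<epsilon> * real n))) \<le> exp (2 * \<alpha> * \<epsilon>) * root n (P_na n \<alpha> event_L)"
    if "N \<le> n" for n
  proof (rule root_P_na_event_B_linear_le[OF a _ e])
    show "2 * \<alpha> + 1 \<le> real n" using N that by (meson of_nat_le_iff order_trans)
  qed
  then have "\<forall>\<^sub>F n in sequentially. ereal (root n (P_na n \<alpha> (event_B n (\<epsilon> * real n))))
      \<le> ereal (exp (2 * \<alpha> * \<epsilon>) * root n (P_na n \<alpha> event_L))"
    unfolding eventually_sequentially by auto
  then have "limsup (\<lambda>n. ereal (root n (P_na n \<alpha> (event_B n (\<epsilon> * real n)))))
      \<le> limsup (\<lambda>n. ereal (exp (2 * \<alpha> * \<epsilon>) * root n (P_na n \<alpha> event_L)))"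
    by (rule Limsup_mono)
  also have "\<dots> = ereal (exp (2 * \<alpha> * \<epsilon>) * (forest_factor_rate \<alpha> * forest_rate_limit \<alpha>))"
    by (intro lim_imp_Limsup tendsto_ereal tendsto_mult tendsto_const root_P_na_event_L_tendsto[OF a]) simp
  finally show ?thesis .
qed

lemma liminf_root_P_na_event_B_le_limsup:
  assumes a: "0 \<le> \<alpha>" and e: "0 < \<epsilon>"
  shows "liminf (\<lambda>n. ereal (root n (P_na n \<alpha> (event_B n r))))
    \<le> limsup (\<lambda>n. ereal (root n (P_na n \<alpha> (event_B n (\<epsilon> * real n)))))"
proof -
  obtain N :: nat where N: "max \<alpha> (r / \<epsilon>) < real N" using reals_Archimedean2 by blast
  have "root n (P_na n \<alpha> (event_B n r)) \<le> root n (P_na n \<alpha> (event_B n (\<epsilon> * real n)))" if "N \<le> n" for n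
  proof -
    have n: "\<alpha> < real n" "r / \<epsilon> < real n" using N that by auto
    then have "r \<le> \<epsilon> * real n" using e by (simp add: divide_less_eq mult.commute)
    then have "P_na n \<alpha> (event_B n r) \<le> P_na n \<alpha> (event_B n (\<epsilon> * real n))"
      using a n by (intro P_na_mono) (auto intro: event_B_mono)
    then show ?thesis using a n by (intro real_root_le_mono) auto
  qed
  then have "liminf (\<lambda>n. ereal (root n (P_na n \<alpha> (event_B n r))))
      \<le> liminf (\<lambda>n. ereal (root n (P_na n \<alpha> (event_B n (\<epsilon> * real n)))))"
    by (intro Liminf_mono) (auto simp: eventually_sequentially)
  also have "\<dots> \<le> limsup (\<lambda>n. ereal (root n (P_na n \<alpha> (event_B n (\<epsilon> * real n)))))"
    by (rule Liminf_le_Limsup) simp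
  finally show ?thesis .
qed

lemma root_P_na_zero_event_L: "1 \<le> n \<Longrightarrow> root n (P_na n 0 event_L) = 1"
  by (simp add: P_na_zero event_L_def)

lemma root_P_na_zero_event_B: "1 \<le> n \<Longrightarrow> 1 \<le> r \<Longrightarrow> root n (P_na n 0 (event_B n r)) = 1"
  by (simp add: P_na_zero event_B_empty)

lemma root_P_na_zero_le_one: "root n (P_na n 0 Q) \<le> 1"
  by (cases n) (simp_all add: P_na_zero)

lemma ereal_limits_squeeze:
  fixes g k :: "real \<Rightarrow> ereal" and u w :: "real \<Rightarrow> real"
  assumes u: "(u \<longlongrightarrow> l) at_top" "\<And>r. 1 \<le> r \<Longrightarrow> ereal (u r) \<le> g r"
    and w: "(w \<longlongrightarrow> l) (at_right 0)" "\<And>\<epsilon>. 0 < \<epsilon> \<Longrightarrow> k \<epsilon> \<le> ereal (w \<epsilon>)"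
    and gk: "\<And>r \<epsilon>. 0 < \<epsilon> \<Longrightarrow> g r \<le> k \<epsilon>"
  shows "(g \<longlongrightarrow> ereal l) at_top" and "(k \<longlongrightarrow> ereal l) (at_right 0)"
proof -
  have ul: "((\<lambda>r. ereal (u r)) \<longlongrightarrow> ereal l) at_top" using u(1) by (rule tendsto_ereal)
  have wl: "((\<lambda>\<epsilon>. ereal (w \<epsilon>)) \<longlongrightarrow> ereal l) (at_right 0)" using w(1) by (rule tendsto_ereal)
  have g_le: "g r \<le> ereal l" for r
  proof (rule tendsto_lowerbound[OF wl])
    show "\<forall>\<^sub>F \<epsilon> in at_right 0. g r \<le> ereal (w \<epsilon>)"
      using eventually_at_right_less[of "0::real"] by eventually_elim (use gk w(2) in \<open>blast intro: order_trans\<close>)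
  qed simp
  have k_ge: "ereal l \<le> k \<epsilon>" if "0 < \<epsilon>" for \<epsilon>
  proof (rule tendsto_upperbound[OF ul])
    show "\<forall>\<^sub>F r in at_top. ereal (u r) \<le> k \<epsilon>"
      unfolding eventually_at_top_linorder using u(2) gk[OF that] by (blast intro: order_trans)
  qed simp
  show "(g \<longlongrightarrow> ereal l) at_top"
  proof (rule tendsto_sandwich[OF _ _ ul tendsto_const])
    show "\<forall>\<^sub>F r in at_top. ereal (u r) \<le> g r"
      unfolding eventually_at_top_linorder using u(2) by blast
  qed (use g_le in simp)
  show "(k \<longlongrightarrow> ereal l) (at_right 0)"
  proof (rule tendsto_sandwich[OF _ _ tendsto_const wl])
    show "\<forall>\<^sub>F \<epsilon> in at_right 0. ereal l \<le> k \<epsilon>" "\<forall>\<^sub>F \<epsilon> in at_right 0. k \<epsilon> \<le> ereal (w \<epsilon>)"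
      using eventually_at_right_less[of "0::real"] by (eventually_elim; use k_ge w(2) in simp)+
  qed
qed

lemma acyclic_limit_bounds:
  assumes "0 \<le> \<alpha>"
  obtains l u w where "(\<lambda>n. root n (P_na n \<alpha> event_L)) \<longlonglongrightarrow> l"
    and "(u \<longlongrightarrow> l) at_top" "\<And>r. 1 \<le> r \<Longrightarrow> ereal (u r) \<le> liminf (\<lambda>n. ereal (root n (P_na n \<alpha> (event_B n r))))"
    and "(w \<longlongrightarrow> l) (at_right 0)"
      "\<And>\<epsilon>. 0 < \<epsilon> \<Longrightarrow> limsup (\<lambda>n. ereal (root n (P_na n \<alpha> (event_B n (\<epsilon> * real n))))) \<le> ereal (w \<epsilon>)"
proof (cases "\<alpha> = 0")
  case True
  show ?thesis
  proof (rule that[of 1 "\<lambda>_. 1" "\<lambda>_. 1"])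
    have "\<forall>\<^sub>F n in sequentially. root n (P_na n \<alpha> event_L) = 1"
      using True root_P_na_zero_event_L unfolding eventually_sequentially by blast
    then show "(\<lambda>n. root n (P_na n \<alpha> event_L)) \<longlonglongrightarrow> 1" by (rule tendsto_eventually)
    show "ereal 1 \<le> liminf (\<lambda>n. ereal (root n (P_na n \<alpha> (event_B n r))))" if "1 \<le> r" for r
    proof (rule Liminf_bounded)
      have "\<forall>\<^sub>F n in sequentially. root n (P_na n \<alpha> (event_B n r)) = 1"
        using True root_P_na_zero_event_B[OF _ that] unfolding eventually_sequentially by blast
      then show "\<forall>\<^sub>F n in sequentially. ereal 1 \<le> ereal (root n (P_na n \<alpha> (event_B n r)))"
        by eventually_elim simp
    qed
    show "limsup (\<lambda>n. ereal (root n (P_na n \<alpha> (event_B n (\<epsilon> * real n))))) \<le> ereal 1" for \<epsilon>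
      using True root_P_na_zero_le_one by (intro Limsup_bounded) auto
  qed simp_all
next
  case False
  then have a: "0 < \<alpha>" using assms by simp
  have "((\<lambda>\<epsilon>. exp (2 * \<alpha> * \<epsilon>) * (forest_factor_rate \<alpha> * forest_rate_limit \<alpha>))
      \<longlongrightarrow> exp (2 * \<alpha> * 0) * (forest_factor_rate \<alpha> * forest_rate_limit \<alpha>)) (at_right 0)"
    by (intro tendsto_intros)
  then show ?thesis
    using that[OF root_P_na_event_L_tendsto[OF a] tendsto_mult[OF tendsto_const forest_rate_limit_tendsto[OF a]]]
      liminf_root_P_na_ge[OF a] limsup_root_P_na_event_B_linear_le[OF a] event_B_iff_components_le
    by (force simp: bounded_forests_def all_pairs_eq_pairs_on)
qed

theorem theorem2p4:
  fixes \<alpha> :: real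
  assumes "\<alpha> \<ge> 0"
  shows "\<exists>l :: real.
     ((\<lambda>n. root n (P_na n \<alpha> event_L)) \<longlonglongrightarrow> l) \<and>
     ((\<lambda>r::real. liminf (\<lambda>n. ereal (root n (P_na n \<alpha> (event_B n r)))))
        \<longlongrightarrow> ereal l) at_top \<and>
     ((\<lambda>\<epsilon>::real. limsup (\<lambda>n. ereal (root n (P_na n \<alpha> (event_B n (\<epsilon> * real n))))))
        \<longlongrightarrow> ereal l) (at_right 0)"
proof -
  obtain l u w where L: "(\<lambda>n. root n (P_na n \<alpha> event_L)) \<longlonglongrightarrow> l"
    and u: "(u \<longlongrightarrow> l) at_top" "\<And>r. 1 \<le> r \<Longrightarrow> ereal (u r) \<le> liminf (\<lambda>n. ereal (root n (P_na n \<alpha> (event_B n r))))"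
    and w: "(w \<longlongrightarrow> l) (at_right 0)"
      "\<And>\<epsilon>. 0 < \<epsilon> \<Longrightarrow> limsup (\<lambda>n. ereal (root n (P_na n \<alpha> (event_B n (\<epsilon> * real n))))) \<le> ereal (w \<epsilon>)"
    using acyclic_limit_bounds[OF assms] by blast
  then show ?thesis
    using ereal_limits_squeeze[OF u w liminf_root_P_na_event_B_le_limsup[OF assms]] by blast
qed

end
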